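(* For every $t\ge 0$, every $k\ge 1$ and every collection $\Omega$ of functions: (1) $\rho_0\bigl(\mathsf{gcr}^{(t)}\bigr)=\rho_0\bigl(\mathsf{TL}_2^{(t+1)}(\Omega)\bigr)=\rho_0\bigl(\mathsf{gwl}_1^{(t)}\bigr)$; (2) $\rho_0\bigl(\mathsf{gwl}_k^{(\infty)}\bigr)=\rho_0\bigl(\mathsf{TL}_{k+1}(\Omega)\bigr)$.
   Context: Fix integers $n\ge 1$ and $\ell\ge 1$. A graph is a triple $G=(V_G,E_G,\mathrm{col}_G)$ with $V_G=[n]=\{1,\dots,n\}$, $E_G$ a set of unordered pairs of distinct vertices (undirected, no loops), and a vertex labelling $\mathrm{col}_G:V_G\to\mathbb R^\ell$; $N_G(v)=\{u:uv\in E_G\}$. Let $\mathcal G$ be the set of all such graphs. Tensor language $\mathsf{TL}(\Omega)$: let $\Omega$ be a collection of functions, each of the form $f:\mathbb R^p\to\mathbb R$ for some $p\ge1$ depending on $f$. Expressions are generated by $\varphi::=\mathbf 1_{x=y}\mid \mathbf 1_{x\neq y}\mid E(x,y)\mid P_s(x)\mid \varphi\cdot\varphi\mid \varphi+\varphi\mid a\cdot\varphi\mid f(\varphi_1,\dots,\varphi_p)\mid \sum_x\varphi$, with $x,y$ index variables, $s\in[\ell]$, $a\in\mathbb R$, $f\in\Omega$ of arity $p$. Free variables: $\mathrm{free}(\mathbf 1_{x\,\mathrm{op}\,y})=\mathrm{free}(E(x,y))=\{x,y\}$, $\mathrm{free}(P_s(x))=\{x\}$; union of the components' free variables for $\cdot$,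 $+$, $f(\dots)$; $\mathrm{free}(a\cdot\varphi)=\mathrm{free}(\varphi)$; $\mathrm{free}(\sum_x\varphi)=\mathrm{free}(\varphi)\setminus\{x\}$. Semantics: for a graph $G$ and a valuation $\nu$ mapping variables to $V_G$: $[\![E(x,y)]\!]^\nu_G=1$ if $\nu(x)\nu(y)\in E_G$ and $0$ otherwise; $[\![P_s(x)]\!]^\nu_G=\mathrm{col}_G(\nu(x))_s$; $[\![\mathbf 1_{x\,\mathrm{op}\,y}]\!]^\nu_G=1$ if $\nu(x)\,\mathrm{op}\,\nu(y)$ and $0$ otherwise; $\cdot$, $+$, scalar multiplication and $f$ act on values; $[\![\sum_x\varphi]\!]^\nu_G=\sum_{v\in V_G}[\![\varphi]\!]^{\nu[x\mapsto v]}_G$. Summation depth $\mathrm{sd}$: $0$ for atoms, maximum over the components for $\cdot$, $+$, $f(\dots)$, $\mathrm{sd}(a\cdot\varphi)=\mathrm{sd}(\varphi)$, $\mathrm{sd}(\sum_x\varphi)=\mathrm{sd}(\varphi)+1$. $\mathsf{TL}_k(\Omega)$ is the set of expressions in which only variables from $\{x_1,\dots,x_k\}$ occur (free or bound; variables may be re-bound), and $\mathsf{TL}_k^{(t)}(\Omega)$ its subset of summation depth at most $t$. For a set $\mathcal L$ of expressions, $\rho_0(\mathcal L)$ is the set of pairs of graphs $(G,H)$ with $[\![\varphi]\!]_G=[\![\varphi]\!]_H$ for all closed (no free variables) $\varphi\in\mathcal L$. Color refinement: $\mathsf{cr}^{(0)}(G,v)=\mathrm{col}_G(v)$, $\mathsf{cr}^{(t+1)}(G,v)=\bigl(\mathsf{cr}^{(t)}(G,v),\{\!\{\mathsf{cr}^{(t)}(G,u):u\in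 N_G(v)\}\!\}\bigr)$, and $\mathsf{gcr}^{(t)}(G)=\{\!\{\mathsf{cr}^{(t)}(G,v):v\in V_G\}\!\}$ (multisets; labels compared as formal objects across graphs). $k$-dimensional Weisfeiler–Leman ($k\ge1$): for $\mathbf v\in V_G^k$, $\mathsf{atp}_k(G,\mathbf v)$ records, for all $1\le i<j\le k$, whether $v_i=v_j$ and whether $v_iv_j\in E_G$, together with $\mathrm{col}_G(v_i)$ for all $i$. $\mathsf{wl}_k^{(0)}(G,\mathbf v)=\mathsf{atp}_k(G,\mathbf v)$, $\mathsf{wl}_k^{(t+1)}(G,\mathbf v)=\bigl(\mathsf{wl}_k^{(t)}(G,\mathbf v),\{\!\{(\mathsf{atp}_{k+1}(G,(v_1,\dots,v_k,u)),\mathsf{wl}_k^{(t)}(G,\mathbf v[u/1]),\dots,\mathsf{wl}_k^{(t)}(G,\mathbf v[u/k])):u\in V_G\}\!\}\bigr)$, where $\mathbf v[u/i]$ replaces the $i$-th entry by $u$. $\mathsf{gwl}_k^{(t)}(G)=\{\!\{\mathsf{wl}_k^{(t)}(G,\mathbf v):\mathbf v\in V_G^k\}\!\}$. $\rho_0(\mathsf{gcr}^{(t)})=\{(G,H):\mathsf{gcr}^{(t)}(G)=\mathsf{gcr}^{(t)}(H)\}$, $\rho_0(\mathsf{gwl}_k^{(t)})=\{(G,H):\mathsf{gwl}_k^{(t)}(G)=\mathsf{gwl}_k^{(t)}(H)\}$, and $\rho_0(\mathsf{gwl}_k^{(\infty)})=\bigcap_{t\ge0}\rho_0(\mathsf{gwl}_k^{(t)})$.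 *)

theory Defs
  imports Complex_Main "HOL-Library.Multiset"
begin

text \<open>A graph is a pair (E, col): E is a set of 2-element subsets of {1..n}
  (undirected edges, no loops), col v s is the s-th coordinate of the label of v.
  Labels are stored canonically: col v s = 0 whenever v is not a vertex or s is not
  in {1..l}, so that (E, col) corresponds bijectively to the paper's graphs.\<close>

type_synonym graph = "nat set set \<times> (nat \<Rightarrow> nat \<Rightarrow> real)"

definition graphs :: "nat \<Rightarrow> nat \<Rightarrow> graph set" where
  "graphs n l = {(E, col).
      E \<subseteq> {{u, v} | u v. u \<in> {1..n} \<and> v \<in> {1..n} \<and> u \<noteq> v} \<and>
      (\<forall>v s. (v \<notin> {1..n} \<or> s \<notin> {1..l}) \<longrightarrow> col v s = 0)}"

definition edges :: "graph \<Rightarrow> nat set set" where "edges G = fst G"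
definition col :: "graph \<Rightarrow> nat \<Rightarrow> nat \<Rightarrow> real" where "col G = snd G"

definition nbrs :: "nat \<Rightarrow> graph \<Rightarrow> nat \<Rightarrow> nat set" where
  "nbrs n G v = {u \<in> {1..n}. {u, v} \<in> edges G}"

text \<open>Index variables are natural numbers (variable x_i is i). A function symbol is a
  pair (p, f) of an arity p and a function f on real vectors of length p
  (represented as real lists).\<close>

type_synonym fsym = "nat \<times> (real list \<Rightarrow> real)"

datatype tl =
    EqI nat nat
  | NeqI nat nat
  | EdgeA nat nat
  | Lab nat nat     \<comment> \<open>Lab s x = P_s(x)\<close>
  | Mul tl tl
  | Add tl tl
  | Scal real tl
  | App fsym "tl list"
  | Sum nat tl

primrec vars :: "tl \<Rightarrow> nat set" where
  "vars (EqI x y) = {x, y}"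
| "vars (NeqI x y) = {x, y}"
| "vars (EdgeA x y) = {x, y}"
| "vars (Lab s x) = {x}"
| "vars (Mul a b) = vars a \<union> vars b"
| "vars (Add a b) = vars a \<union> vars b"
| "vars (Scal c a) = vars a"
| "vars (App f as) = \<Union> (set (map vars as))"
| "vars (Sum x a) = insert x (vars a)"

primrec free :: "tl \<Rightarrow> nat set" where
  "free (EqI x y) = {x, y}"
| "free (NeqI x y) = {x, y}"
| "free (EdgeA x y) = {x, y}"
| "free (Lab s x) = {x}"
| "free (Mul a b) = free a \<union> free b"
| "free (Add a b) = free a \<union> free b"
| "free (Scal c a) = free a"
| "free (App f as) = \<Union> (set (map free as))"
| "free (Sum x a) = free a - {x}"

primrec sd :: "tl \<Rightarrow> nat" where
  "sd (EqI x y) = 0"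
| "sd (NeqI x y) = 0"
| "sd (EdgeA x y) = 0"
| "sd (Lab s x) = 0"
| "sd (Mul a b) = max (sd a) (sd b)"
| "sd (Add a b) = max (sd a) (sd b)"
| "sd (Scal c a) = sd a"
| "sd (App f as) = fold max (map sd as) 0"
| "sd (Sum x a) = Suc (sd a)"

primrec wf :: "fsym set \<Rightarrow> nat \<Rightarrow> tl \<Rightarrow> bool" where
  "wf \<Omega> l (EqI x y) = True"
| "wf \<Omega> l (NeqI x y) = True"
| "wf \<Omega> l (EdgeA x y) = True"
| "wf \<Omega> l (Lab s x) = (s \<in> {1..l})"
| "wf \<Omega> l (Mul a b) = (wf \<Omega> l a \<and> wf \<Omega> l b)"
| "wf \<Omega> l (Add a b) = (wf \<Omega> l a \<and> wf \<Omega> l b)"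
| "wf \<Omega> l (Scal c a) = wf \<Omega> l a"
| "wf \<Omega> l (App f as) = (f \<in> \<Omega> \<and> length as = fst f \<and> list_all (wf \<Omega> l) as)"
| "wf \<Omega> l (Sum x a) = wf \<Omega> l a"

primrec sem :: "nat \<Rightarrow> graph \<Rightarrow> (nat \<Rightarrow> nat) \<Rightarrow> tl \<Rightarrow> real" where
  "sem n G \<nu> (EqI x y) = (if \<nu> x = \<nu> y then 1 else 0)"
| "sem n G \<nu> (NeqI x y) = (if \<nu> x \<noteq> \<nu> y then 1 else 0)"
| "sem n G \<nu> (EdgeA x y) = (if {\<nu> x, \<nu> y} \<in> edges G then 1 else 0)"
| "sem n G \<nu> (Lab s x) = col G (\<nu> x) s"
| "sem n G \<nu> (Mul a b) = sem n G \<nu> a * sem n G \<nu> b"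
| "sem n G \<nu> (Add a b) = sem n G \<nu> a + sem n G \<nu> b"
| "sem n G \<nu> (Scal c a) = c * sem n G \<nu> a"
| "sem n G \<nu> (App f as) = snd f (map (sem n G \<nu>) as)"
| "sem n G \<nu> (Sum x a) = (\<Sum>v\<in>{1..n}. sem n G (\<nu>(x := v)) a)"

definition TL :: "fsym set \<Rightarrow> nat \<Rightarrow> nat \<Rightarrow> tl set" where
  "TL \<Omega> l k = {\<phi>. wf \<Omega> l \<phi> \<and> vars \<phi> \<subseteq> {1..k}}"

definition TLd :: "fsym set \<Rightarrow> nat \<Rightarrow> nat \<Rightarrow> nat \<Rightarrow> tl set" where
  "TLd \<Omega> l k t = {\<phi> \<in> TL \<Omega> l k. sd \<phi> \<le> t}"

text \<open>Value of a closed expression (the valuation is irrelevant for closed expressions).\<close>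
definition closed_val :: "nat \<Rightarrow> graph \<Rightarrow> tl \<Rightarrow> real" where
  "closed_val n G \<phi> = sem n G (\<lambda>_. 1) \<phi>"

definition rho0_TL :: "nat \<Rightarrow> nat \<Rightarrow> tl set \<Rightarrow> (graph \<times> graph) set" where
  "rho0_TL n l L = {(G, H). G \<in> graphs n l \<and> H \<in> graphs n l \<and>
      (\<forall>\<phi>\<in>L. free \<phi> = {} \<longrightarrow> closed_val n G \<phi> = closed_val n H \<phi>)}"

datatype crcol = CInit "nat \<Rightarrow> real" | CRef crcol "crcol multiset"

primrec cr :: "nat \<Rightarrow> graph \<Rightarrow> nat \<Rightarrow> nat \<Rightarrow> crcol" where
  "cr n G 0 v = CInit (col G v)"
| "cr n G (Suc t) v = CRef (cr n G t v) (image_mset (cr n G t) (mset_set (nbrs n G v)))"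

definition gcr :: "nat \<Rightarrow> graph \<Rightarrow> nat \<Rightarrow> crcol multiset" where
  "gcr n G t = image_mset (cr n G t) (mset_set {1..n})"

definition rho0_gcr :: "nat \<Rightarrow> nat \<Rightarrow> nat \<Rightarrow> (graph \<times> graph) set" where
  "rho0_gcr n l t = {(G, H). G \<in> graphs n l \<and> H \<in> graphs n l \<and> gcr n G t = gcr n H t}"

text \<open>k-tuples of vertices are lists of length k (list position i-1 holds v_i).\<close>
type_synonym atype = "(bool \<times> bool) list \<times> (nat \<Rightarrow> real) list"

definition atp :: "graph \<Rightarrow> nat list \<Rightarrow> atype" where
  "atp G vs = ([(vs ! i = vs ! j, {vs ! i, vs ! j} \<in> edges G).
                  i \<leftarrow> [0..<length vs], j \<leftarrow> [0..<length vs], i < j],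
               map (col G) vs)"

datatype wlcol = WInit atype | WRef wlcol "(atype \<times> wlcol list) multiset"

primrec wl :: "nat \<Rightarrow> graph \<Rightarrow> nat \<Rightarrow> nat list \<Rightarrow> wlcol" where
  "wl n G 0 vs = WInit (atp G vs)"
| "wl n G (Suc t) vs = WRef (wl n G t vs)
     (image_mset (\<lambda>u. (atp G (vs @ [u]), map (\<lambda>i. wl n G t (vs[i := u])) [0..<length vs]))
        (mset_set {1..n}))"

definition tuples :: "nat \<Rightarrow> nat \<Rightarrow> nat list set" where
  "tuples n k = {vs. length vs = k \<and> set vs \<subseteq> {1..n}}"

definition gwl :: "nat \<Rightarrow> graph \<Rightarrow> nat \<Rightarrow> nat \<Rightarrow> wlcol multiset" where
  "gwl n G k t = image_mset (wl n G t) (mset_set (tuples n k))"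

definition rho0_gwl :: "nat \<Rightarrow> nat \<Rightarrow> nat \<Rightarrow> nat \<Rightarrow> (graph \<times> graph) set" where
  "rho0_gwl n l k t = {(G, H). G \<in> graphs n l \<and> H \<in> graphs n l \<and> gwl n G k t = gwl n H k t}"

definition rho0_gwl_inf :: "nat \<Rightarrow> nat \<Rightarrow> nat \<Rightarrow> (graph \<times> graph) set" where
  "rho0_gwl_inf n l k = (\<Inter>t. rho0_gwl n l k t)"

end

theory Submission
  imports Defs "HOL-Combinatorics.Transposition"
begin

text \<open>
  Soundness: by induction on expressions, the value of an expression of \<open>TL\<^sub>k\<^sub>+\<^sub>1\<close> whose
  free variables are read off a \<open>(k+1)\<close>-tuple only depends on the \<open>k\<close>-WL colours of that tuple
  and of its \<open>k\<close>-subtuples. A summation binds one variable, so its body has at most \<open>k\<close> other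
  free variables; dropping an unused position turns the sum into a sum over exactly the multiset
  that one further round of \<open>k\<close>-WL records. For two variables the same argument works with
  colour refinement, the multiset of all vertices splitting into the vertex itself, its
  neighbours and the rest.

  Completeness: conversely, for every colour occurring in \<open>G\<close> or \<open>H\<close> an expression of the
  fragment evaluates to the indicator of that colour, by recursion on the number of rounds.
  Multiset equality is tested through counts, which are integers in \<open>[0, n]\<close> and can therefore
  be turned into 0/1 values by Lagrange interpolation polynomials. Summing an indicator over
  all tuples counts its colour class. The constructions use no function symbols.
\<close>

lemma sem_cong_free:
  "\<forall>x\<in>free \<phi>. \<nu> x = \<mu> x \<Longrightarrow> sem n G \<nu> \<phi> = sem n G \<mu> \<phi>"
proof (induction \<phi> arbitrary: \<nu> \<mu>)
  case (Mul a b)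
  then show ?case by (metis UnCI free.simps(5) sem.simps(5))
next
  case (Add a b)
  then show ?case by (metis UnCI free.simps(6) sem.simps(6))
next
  case (App f as)
  then show ?case by (auto intro!: arg_cong[where f = "snd f"])
next
  case (Sum x a)
  then show ?case by (auto intro!: sum.cong)
qed auto

lemma free_subset_vars: "free \<phi> \<subseteq> vars \<phi>"
  by (induction \<phi>) auto

lemma sd_App_le_iff: "sd (App f as) \<le> t \<longleftrightarrow> (\<forall>a\<in>set as. sd a \<le> t)"
  by (simp add: Max.set_eq_fold[symmetric])

primrec rename :: "(nat \<Rightarrow> nat) \<Rightarrow> tl \<Rightarrow> tl" where
  "rename r (EqI x y) = EqI (r x) (r y)"
| "rename r (NeqI x y) = NeqI (r x) (r y)"
| "rename r (EdgeA x y) = EdgeA (r x) (r y)"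
| "rename r (Lab s x) = Lab s (r x)"
| "rename r (Mul a b) = Mul (rename r a) (rename r b)"
| "rename r (Add a b) = Add (rename r a) (rename r b)"
| "rename r (Scal c a) = Scal c (rename r a)"
| "rename r (App f as) = App f (map (rename r) as)"
| "rename r (Sum x a) = Sum (r x) (rename r a)"

lemma sem_rename: "inj r \<Longrightarrow> sem n G \<nu> (rename r \<phi>) = sem n G (\<nu> \<circ> r) \<phi>"
proof (induction \<phi> arbitrary: \<nu>)
  case (App f as)
  then show ?case by (auto intro!: arg_cong[where f = "snd f"])
next
  case (Sum x a)
  have "(\<nu>(r x := v)) \<circ> r = (\<nu> \<circ> r)(x := v)" for v
    using Sum.prems by (auto simp: fun_eq_iff inj_eq)
  then show ?case by (simp only: rename.simps sem.simps Sum.IH[OF Sum.prems])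
qed auto

lemma vars_rename: "vars (rename r \<phi>) = r ` vars \<phi>"
  by (induction \<phi>) auto

lemma free_rename: "inj r \<Longrightarrow> free (rename r \<phi>) = r ` free \<phi>"
proof (induction \<phi>)
  case (Sum x a)
  then show ?case by (auto simp: inj_eq)
qed auto

lemma sd_rename: "sd (rename r \<phi>) = sd \<phi>"
proof (induction \<phi>)
  case (App f as)
  then have "map sd (map (rename r) as) = map sd as" by simp
  then show ?case by (simp only: rename.simps sd.simps)
qed auto

lemma wf_rename: "wf \<Omega> l (rename r \<phi>) = wf \<Omega> l \<phi>"
  by (induction \<phi>) (auto simp: list_all_iff)

lemma mem_TLd_iff: "\<phi> \<in> TLd \<Omega> l k t \<longleftrightarrow> wf \<Omega> l \<phi> \<and> vars \<phi> \<subseteq> {1..k} \<and> sd \<phi> \<le> t"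
  by (auto simp: TLd_def TL_def)

lemma TLd_mono: "\<phi> \<in> TLd \<Omega> l k s \<Longrightarrow> s \<le> t \<Longrightarrow> \<phi> \<in> TLd \<Omega> l k t"
  by (simp add: mem_TLd_iff)

lemma mem_TLd_simps [simp]:
  "EqI x y \<in> TLd \<Omega> l k t \<longleftrightarrow> x \<in> {1..k} \<and> y \<in> {1..k}"
  "NeqI x y \<in> TLd \<Omega> l k t \<longleftrightarrow> x \<in> {1..k} \<and> y \<in> {1..k}"
  "EdgeA x y \<in> TLd \<Omega> l k t \<longleftrightarrow> x \<in> {1..k} \<and> y \<in> {1..k}"
  "Lab s x \<in> TLd \<Omega> l k t \<longleftrightarrow> s \<in> {1..l} \<and> x \<in> {1..k}"
  "Mul a b \<in> TLd \<Omega> l k t \<longleftrightarrow> a \<in> TLd \<Omega> l k t \<and> b \<in> TLd \<Omega> l k t"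
  "Add a b \<in> TLd \<Omega> l k t \<longleftrightarrow> a \<in> TLd \<Omega> l k t \<and> b \<in> TLd \<Omega> l k t"
  "Scal c a \<in> TLd \<Omega> l k t \<longleftrightarrow> a \<in> TLd \<Omega> l k t"
  "Sum x a \<in> TLd \<Omega> l k (Suc t) \<longleftrightarrow> x \<in> {1..k} \<and> a \<in> TLd \<Omega> l k t"
  by (auto simp: mem_TLd_iff)

lemma rename_mem_TLd:
  "\<phi> \<in> TLd \<Omega> l k t \<Longrightarrow> r ` {1..k} \<subseteq> {1..k} \<Longrightarrow> rename r \<phi> \<in> TLd \<Omega> l k t"
  by (auto simp: mem_TLd_iff vars_rename sd_rename wf_rename)

lemma free_subset_if_mem_TLd: "\<phi> \<in> TLd \<Omega> l k t \<Longrightarrow> free \<phi> \<subseteq> {1..k}"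
  using free_subset_vars by (auto simp: mem_TLd_iff)

lemma image_mset_eq_transfer:
  assumes eq: "image_mset f A = image_mset g B"
    and FH: "\<And>a b. a \<in># A \<Longrightarrow> b \<in># B \<Longrightarrow> f a = g b \<Longrightarrow> F a = H b"
  shows "image_mset F A = image_mset H B"
proof -
  \<comment> \<open>\<open>F a\<close> only depends on \<open>f a\<close>: it equals \<open>H b\<close> for every \<open>b\<close> with \<open>g b = f a\<close>.\<close>
  define pick where "pick c = (SOME b. b \<in># B \<and> g b = c)" for c
  have pick: "pick c \<in># B" "g (pick c) = c" if "c \<in># image_mset f A" for c
  proof -
    have "\<exists>b. b \<in># B \<and> g b = c" using that unfolding eq by auto
    then show "pick c \<in># B" "g (pick c) = c" unfolding pick_def by (metis (mono_tags, lifting) someI_ex)+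
  qed
  have "F a = H (pick (f a))" if a: "a \<in># A" for a
    using FH[OF a pick(1)] pick(2) a by simp
  then have "image_mset F A = image_mset (H \<circ> pick) (image_mset f A)"
    by (simp add: multiset.map_comp cong: image_mset_cong)
  moreover have "H b = H (pick (g b))" if b: "b \<in># B" for b
  proof -
    have gb: "g b \<in># image_mset f A" using b unfolding eq by simp
    then obtain a where a: "a \<in># A" "f a = g b" by auto
    show ?thesis using FH[OF a(1) b a(2)] FH[OF a(1) pick(1)[OF gb]] pick(2)[OF gb] a(2) by simp
  qed
  then have "image_mset H B = image_mset (H \<circ> pick) (image_mset g B)"
    by (simp add: multiset.map_comp cong: image_mset_cong)
  ultimately show ?thesis using eq by simp
qed

lemma sum_eq_if_image_mset_eq:
  assumes "finite A" "finite B" "image_mset f (mset_set A) = image_mset g (mset_set B)"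
    and "\<And>a b. a \<in> A \<Longrightarrow> b \<in> B \<Longrightarrow> f a = g b \<Longrightarrow> F a = H b"
  shows "(\<Sum>a\<in>A. F a) = (\<Sum>b\<in>B. H b)"
proof -
  have "image_mset F (mset_set A) = image_mset H (mset_set B)"
    by (rule image_mset_eq_transfer[OF assms(3)]) (use assms in auto)
  then show ?thesis by (simp add: sum_unfold_sum_mset)
qed

lemma sum_of_bool_eq_count:
  "finite A \<Longrightarrow> (\<Sum>a\<in>A. of_bool (f a = c)) = of_nat (count (image_mset f (mset_set A)) c)"
  by (simp add: count_image_mset Int_def conj_commute)

lemma multiset_eq_iff_count_eq_on:
  assumes "set_mset M \<subseteq> S" "set_mset N \<subseteq> S"
  shows "M = N \<longleftrightarrow> (\<forall>x\<in>S. count M x = count N x)"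
proof (intro iffI multiset_eqI)
  fix x assume counts: "\<forall>x\<in>S. count M x = count N x"
  show "count M x = count N x"
  proof (cases "x \<in> S")
    case False
    then have "x \<notin># M" "x \<notin># N" using assms by auto
    then show ?thesis by (simp add: not_in_iff)
  qed (use counts in simp)
qed simp

lemma singleton_notin_edges: "G \<in> graphs n l \<Longrightarrow> {v} \<notin> edges G"
  unfolding graphs_def edges_def by (force simp: doubleton_eq_iff)

lemma col_eq_0: "G \<in> graphs n l \<Longrightarrow> v \<notin> {1..n} \<or> s \<notin> {1..l} \<Longrightarrow> col G v s = 0"
  unfolding graphs_def col_def by auto

lemma col_eq_iff_labels_eq:
  assumes "G \<in> graphs n l" "H \<in> graphs n l"
  shows "col G v = col H w \<longleftrightarrow> (\<forall>s\<in>{1..l}. col G v s = col H w s)"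
proof (intro iffI ext)
  fix s assume "\<forall>s\<in>{1..l}. col G v s = col H w s"
  then show "col G v s = col H w s" using col_eq_0[OF assms(1)] col_eq_0[OF assms(2)] by metis
qed simp

lemma nbrs_subset: "nbrs n G v \<subseteq> {1..n}"
  unfolding nbrs_def by auto

lemma finite_nbrs [simp]: "finite (nbrs n G v)"
  using finite_subset[OF nbrs_subset] by simp

lemma card_nbrs_le: "card (nbrs n G v) \<le> n"
proof -
  have "card (nbrs n G v) \<le> card {1..n}" by (rule card_mono[OF _ nbrs_subset]) simp
  then show ?thesis by simp
qed

lemma cr_eq_le: "cr n G t v = cr n H t w \<Longrightarrow> s \<le> t \<Longrightarrow> cr n G s v = cr n H s w"
  by (induction t) (auto simp: le_Suc_eq)

lemma cr_eq_imp_col_eq: "cr n G t v = cr n H t w \<Longrightarrow> col G v = col H w"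
  using cr_eq_le[of n G t v H w 0] by simp

lemma gcr_eq_le: "gcr n G t = gcr n H t \<Longrightarrow> s \<le> t \<Longrightarrow> gcr n G s = gcr n H s"
  unfolding gcr_def by (erule image_mset_eq_transfer) (auto intro: cr_eq_le)

lemma wl_eq_le: "wl n G t v = wl n H t w \<Longrightarrow> s \<le> t \<Longrightarrow> wl n G s v = wl n H s w"
  by (induction t) (auto simp: le_Suc_eq)

lemma wl_eq_imp_atp_eq: "wl n G t v = wl n H t w \<Longrightarrow> atp G v = atp H w"
  using wl_eq_le[of n G t v H w 0] by simp

definition index_pairs :: "nat \<Rightarrow> (nat \<times> nat) list" where
  "index_pairs m = [(i, j). i \<leftarrow> [0..<m], j \<leftarrow> [0..<m], i < j]"

lemma set_index_pairs: "set (index_pairs m) = {(i, j). i < j \<and> j < m}"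
  unfolding index_pairs_def by auto

lemma atp_conv_index_pairs:
  "atp G vs = (map (\<lambda>(i, j). (vs ! i = vs ! j, {vs ! i, vs ! j} \<in> edges G)) (index_pairs (length vs)),
               map (col G) vs)"
  unfolding atp_def index_pairs_def by (simp add: map_concat comp_def if_distrib cong: if_cong)

lemma atp_eq_iff:
  assumes len: "length vs = length ws"
  shows "atp G vs = atp H ws \<longleftrightarrow>
    (\<forall>i j. i < j \<and> j < length vs \<longrightarrow> (vs ! i = vs ! j \<longleftrightarrow> ws ! i = ws ! j) \<and>
        ({vs ! i, vs ! j} \<in> edges G \<longleftrightarrow> {ws ! i, ws ! j} \<in> edges H)) \<and>
    (\<forall>i<length vs. col G (vs ! i) = col H (ws ! i))"
proof -
  have cols: "map (col G) vs = map (col H) ws \<longleftrightarrow> (\<forall>i<length vs. col G (vs ! i) = col H (ws ! i))"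
    using len by (simp add: list_eq_iff_nth_eq)
  have "(\<forall>p\<in>set (index_pairs (length vs)). P p) \<longleftrightarrow> (\<forall>i j. i < j \<and> j < length vs \<longrightarrow> P (i, j))" for P
    unfolding set_index_pairs by blast
  then show ?thesis
    unfolding atp_conv_index_pairs prod.inject cols len[symmetric] map_eq_conv by (simp only: prod.case prod.inject)
qed

lemma atp_eq_imp_length_eq: "atp G vs = atp H ws \<Longrightarrow> length vs = length ws"
  unfolding atp_def by (drule arg_cong[where f = "length \<circ> snd"]) simp

lemma atp_eq_imp_nth:
  assumes G: "G \<in> graphs n l" and H: "H \<in> graphs n l" and eq: "atp G vs = atp H ws"
    and "i < length vs" "j < length vs"
  shows "(vs ! i = vs ! j \<longleftrightarrow> ws ! i = ws ! j) \<and>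
    ({vs ! i, vs ! j} \<in> edges G \<longleftrightarrow> {ws ! i, ws ! j} \<in> edges H) \<and> col G (vs ! i) = col H (ws ! i)"
proof -
  have len: "length vs = length ws" using atp_eq_imp_length_eq[OF eq] .
  note pattern = eq[unfolded atp_eq_iff[OF len]]
  consider "i < j" | "i = j" | "j < i" by linarith
  then show ?thesis
  proof cases
    case 1
    then show ?thesis using pattern assms(4,5) by blast
  next
    case 2
    then show ?thesis using pattern assms(4) singleton_notin_edges[OF G] singleton_notin_edges[OF H] by auto
  next
    case 3
    then have "(vs ! j = vs ! i \<longleftrightarrow> ws ! j = ws ! i) \<and>
        ({vs ! j, vs ! i} \<in> edges G \<longleftrightarrow> {ws ! j, ws ! i} \<in> edges H)"
      using pattern assms(4) by blast
    then show ?thesis using pattern assms(4) by (auto simp: insert_commute)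
  qed
qed

lemma tuples_update: "v \<in> tuples n k \<Longrightarrow> u \<in> {1..n} \<Longrightarrow> v[i := u] \<in> tuples n k"
  unfolding tuples_def using set_update_subset_insert[of v i u] by auto

lemma nth_in_tuples: "vs \<in> tuples n k \<Longrightarrow> i < k \<Longrightarrow> vs ! i \<in> {1..n}"
  unfolding tuples_def using nth_mem by blast

lemma finite_tuples: "finite (tuples n k)"
proof -
  have "tuples n k = set (List.n_lists k [1..<Suc n])"
    unfolding tuples_def set_n_lists by auto
  then show ?thesis by simp
qed

lemma replicate_in_tuples: "n \<ge> 1 \<Longrightarrow> replicate k 1 \<in> tuples n k"
  unfolding tuples_def by auto

definition wl_entry :: "nat \<Rightarrow> graph \<Rightarrow> nat \<Rightarrow> nat list \<Rightarrow> nat \<Rightarrow> atype \<times> wlcol list" where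
  "wl_entry n G t vs u = (atp G (vs @ [u]), map (\<lambda>i. wl n G t (vs[i := u])) [0..<length vs])"

lemma wl_Suc_conv:
  "wl n G (Suc t) vs = WRef (wl n G t vs) (image_mset (wl_entry n G t vs) (mset_set {1..n}))"
  by (simp add: wl_entry_def[abs_def])

lemma map_upt_eq_iff: "map f [0..<p] = map g [0..<q] \<longleftrightarrow> p = q \<and> (\<forall>i<p. f i = g i)"
  by (auto simp: list_eq_iff_nth_eq)

lemma wl_entry_eq_iff:
  "wl_entry n G t v u = wl_entry n H t w u' \<longleftrightarrow> atp G (v @ [u]) = atp H (w @ [u']) \<and>
     length v = length w \<and> (\<forall>i<length v. wl n G t (v[i := u]) = wl n H t (w[i := u']))"
  unfolding wl_entry_def prod.inject map_upt_eq_iff ..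

lemma sum_eq_if_wl_Suc_eq:
  assumes "wl n G (Suc t) v = wl n H (Suc t) w"
    and "\<And>u u'. u \<in> {1..n} \<Longrightarrow> u' \<in> {1..n} \<Longrightarrow> wl_entry n G t v u = wl_entry n H t w u' \<Longrightarrow> f u = g u'"
  shows "(\<Sum>u\<in>{1..n}. f u) = (\<Sum>u\<in>{1..n}. g u)"
proof (rule sum_eq_if_image_mset_eq)
  show "image_mset (wl_entry n G t v) (mset_set {1..n}) = image_mset (wl_entry n H t w) (mset_set {1..n})"
    using assms(1) unfolding wl_Suc_conv by simp
qed (use assms(2) in auto)

section \<open>\<open>k\<close>-WL bounds the distinguishing power of \<open>TL\<^sub>k\<^sub>+\<^sub>1\<close>\<close>

lemma sem_eq_if_wl_entry_eq:
  assumes G: "G \<in> graphs n l" and H: "H \<in> graphs n l"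
  shows "vars \<phi> \<subseteq> {1..Suc k} \<Longrightarrow> sd \<phi> \<le> t \<Longrightarrow> v \<in> tuples n k \<Longrightarrow> w \<in> tuples n k \<Longrightarrow>
    u \<in> {1..n} \<Longrightarrow> u' \<in> {1..n} \<Longrightarrow> wl n G t v = wl n H t w \<Longrightarrow>
    wl_entry n G t v u = wl_entry n H t w u' \<Longrightarrow> \<forall>x\<in>free \<phi>. \<tau> x \<le> k \<Longrightarrow>
    sem n G (\<lambda>x. (v @ [u]) ! \<tau> x) \<phi> = sem n H (\<lambda>x. (w @ [u']) ! \<tau> x) \<phi>"
proof (induction \<phi> arbitrary: t v w u u' \<tau>)
  case (EqI x y)
  then have "atp G (v @ [u]) = atp H (w @ [u'])" "\<tau> x < length (v @ [u])" "\<tau> y < length (v @ [u])"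
    by (auto simp: wl_entry_eq_iff tuples_def)
  then show ?case using atp_eq_imp_nth[OF G H] by simp
next
  case (NeqI x y)
  then have "atp G (v @ [u]) = atp H (w @ [u'])" "\<tau> x < length (v @ [u])" "\<tau> y < length (v @ [u])"
    by (auto simp: wl_entry_eq_iff tuples_def)
  then show ?case using atp_eq_imp_nth[OF G H] by simp
next
  case (EdgeA x y)
  then have "atp G (v @ [u]) = atp H (w @ [u'])" "\<tau> x < length (v @ [u])" "\<tau> y < length (v @ [u])"
    by (auto simp: wl_entry_eq_iff tuples_def)
  then show ?case using atp_eq_imp_nth[OF G H] by simp
next
  case (Lab s x)
  then have "atp G (v @ [u]) = atp H (w @ [u'])" "\<tau> x < length (v @ [u])"
    by (auto simp: wl_entry_eq_iff tuples_def)
  then show ?case using atp_eq_imp_nth[OF G H] by simp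
next
  case (Mul a b)
  have "sem n G (\<lambda>x. (v @ [u]) ! \<tau> x) a = sem n H (\<lambda>x. (w @ [u']) ! \<tau> x) a"
    by (rule Mul.IH(1)) (use Mul.prems in auto)
  moreover have "sem n G (\<lambda>x. (v @ [u]) ! \<tau> x) b = sem n H (\<lambda>x. (w @ [u']) ! \<tau> x) b"
    by (rule Mul.IH(2)) (use Mul.prems in auto)
  ultimately show ?case by simp
next
  case (Add a b)
  have "sem n G (\<lambda>x. (v @ [u]) ! \<tau> x) a = sem n H (\<lambda>x. (w @ [u']) ! \<tau> x) a"
    by (rule Add.IH(1)) (use Add.prems in auto)
  moreover have "sem n G (\<lambda>x. (v @ [u]) ! \<tau> x) b = sem n H (\<lambda>x. (w @ [u']) ! \<tau> x) b"
    by (rule Add.IH(2)) (use Add.prems in auto)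
  ultimately show ?case by simp
next
  case (Scal c a)
  have "sem n G (\<lambda>x. (v @ [u]) ! \<tau> x) a = sem n H (\<lambda>x. (w @ [u']) ! \<tau> x) a"
    by (rule Scal.IH) (use Scal.prems in auto)
  then show ?case by simp
next
  case (App f as)
  have "sem n G (\<lambda>x. (v @ [u]) ! \<tau> x) a = sem n H (\<lambda>x. (w @ [u']) ! \<tau> x) a" if a: "a \<in> set as" for a
    by (rule App.IH[OF a]) (use App.prems(1,3-) App.prems(2)[unfolded sd_App_le_iff] a in auto)
  then show ?case by (simp cong: map_cong)
next
  case (Sum x \<psi>)
  note prems = Sum.prems
  obtain t' where t: "t = Suc t'" "sd \<psi> \<le> t'" using prems(2) by (cases t) auto
  have lens: "length v = k" "length w = k" using prems(3,4) by (simp_all add: tuples_def)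
  \<comment> \<open>At most \<open>k\<close> variables are free in \<open>Sum x \<psi>\<close>, so some position \<open>j\<close> of \<open>v @ [u]\<close> is unused.
    Dropping it (moving \<open>u\<close> into position \<open>j\<close>) gives a \<open>k\<close>-tuple \<open>r\<close> whose next refinement round
    ranges over the summation variable, which takes the last position.\<close>
  let ?F = "free (Sum x \<psi>)"
  obtain j where j: "j \<le> k" "j \<notin> \<tau> ` ?F"
  proof -
    have F: "?F \<subseteq> {1..Suc k} - {x}" using prems(1) free_subset_vars[of \<psi>] by auto
    then have fin: "finite ?F" by (rule finite_subset) simp
    have "card (\<tau> ` ?F) \<le> card ?F" using fin by (rule card_image_le)
    also have "\<dots> \<le> card ({1..Suc k} - {x})" using F by (rule card_mono[rotated]) simp
    also have "\<dots> = k" using prems(1) by simp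
    finally have "\<not> {0..k} \<subseteq> \<tau> ` ?F" using card_mono[of "\<tau> ` ?F" "{0..k}"] fin by auto
    then show thesis using that by (meson atLeastAtMost_iff subsetI zero_le)
  qed
  define \<sigma> where "\<sigma> = (\<lambda>y. if \<tau> y = k then j else \<tau> y)(x := k)"
  have \<sigma>_le: "\<forall>y\<in>free \<psi>. \<sigma> y \<le> k" using prems(9) j(1) by (auto simp: \<sigma>_def)
  have reduce: "sem n X (\<lambda>y. (p @ [z]) ! \<tau> y) (Sum x \<psi>) = (\<Sum>z'\<in>{1..n}. sem n X (\<lambda>y. (r @ [z']) ! \<sigma> y) \<psi>)"
    if p: "length p = k" and r: "r = (if j < k then p[j := z] else p)" for X p z r
  proof -
    have "((\<lambda>y. (p @ [z]) ! \<tau> y)(x := z')) y = (r @ [z']) ! \<sigma> y" if y: "y \<in> free \<psi>" for z' y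
    proof (cases "y = x")
      case False
      then have "\<tau> y \<le> k" "\<tau> y \<noteq> j" using y prems(9) j(2) by auto
      then show ?thesis using False j(1) p r by (auto simp: \<sigma>_def nth_append)
    qed (use p r in \<open>simp add: \<sigma>_def nth_append\<close>)
    then show ?thesis by (auto intro!: sum.cong sem_cong_free)
  qed
  define r where "r = (if j < k then v[j := u] else v)"
  define r' where "r' = (if j < k then w[j := u'] else w)"
  have r_tuples: "r \<in> tuples n k" "r' \<in> tuples n k"
    using prems(3-6) tuples_update by (auto simp: r_def r'_def)
  have wl_r: "wl n G (Suc t') r = wl n H (Suc t') r'"
    using prems(7,8) lens t(1) by (auto simp: r_def r'_def wl_entry_eq_iff)
  have "sem n G (\<lambda>y. (v @ [u]) ! \<tau> y) (Sum x \<psi>) = (\<Sum>z\<in>{1..n}. sem n G (\<lambda>y. (r @ [z]) ! \<sigma> y) \<psi>)"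
    using reduce[OF lens(1) r_def] .
  also have "\<dots> = (\<Sum>z\<in>{1..n}. sem n H (\<lambda>y. (r' @ [z]) ! \<sigma> y) \<psi>)"
  proof (rule sum_eq_if_wl_Suc_eq[OF wl_r])
    fix z z' assume z: "z \<in> {1..n}" "z' \<in> {1..n}" and ent: "wl_entry n G t' r z = wl_entry n H t' r' z'"
    have "wl n G t' r = wl n H t' r'" using wl_r by (simp add: wl_Suc_conv)
    then show "sem n G (\<lambda>y. (r @ [z]) ! \<sigma> y) \<psi> = sem n H (\<lambda>y. (r' @ [z']) ! \<sigma> y) \<psi>"
      using Sum.IH[OF _ t(2) r_tuples z _ ent \<sigma>_le] prems(1) by simp
  qed
  also have "\<dots> = sem n H (\<lambda>y. (w @ [u']) ! \<tau> y) (Sum x \<psi>)"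
    using reduce[OF lens(2) r'_def] by simp
  finally show ?case .
qed

lemma closed_val_eq_if_gwl_eq:
  assumes G: "G \<in> graphs n l" and H: "H \<in> graphs n l" and n: "n \<ge> 1"
    and gwl: "gwl n G k (Suc (sd \<phi>)) = gwl n H k (Suc (sd \<phi>))"
    and vars: "vars \<phi> \<subseteq> {1..Suc k}" and closed: "free \<phi> = {}"
  shows "closed_val n G \<phi> = closed_val n H \<phi>"
proof -
  let ?t = "sd \<phi>"
  obtain v w where v: "v \<in> tuples n k" and w: "w \<in> tuples n k"
    and vw: "wl n G (Suc ?t) v = wl n H (Suc ?t) w"
  proof -
    have "wl n G (Suc ?t) (replicate k 1) \<in># gwl n G k (Suc ?t)"
      using replicate_in_tuples[OF n] finite_tuples unfolding gwl_def by (simp del: wl.simps)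
    then have "wl n G (Suc ?t) (replicate k 1) \<in># gwl n H k (Suc ?t)" by (simp only: gwl)
    then obtain w where "w \<in> tuples n k" "wl n G (Suc ?t) (replicate k 1) = wl n H (Suc ?t) w"
      using finite_tuples unfolding gwl_def by (auto simp del: wl.simps)
    then show thesis using that replicate_in_tuples[OF n] by blast
  qed
  have val: "sem n X \<nu> \<phi> = closed_val n X \<phi>" for X \<nu>
    unfolding closed_val_def by (rule sem_cong_free) (simp add: closed)
  \<comment> \<open>Put the closed expression under one more summation, which one more round of \<open>k\<close>-WL covers.\<close>
  have "real n * closed_val n G \<phi> = (\<Sum>z\<in>{1..n}. sem n G (\<lambda>_. z) \<phi>)"
    by (simp add: val)
  also have "\<dots> = (\<Sum>z\<in>{1..n}. sem n H (\<lambda>_. z) \<phi>)"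
  proof (rule sum_eq_if_wl_Suc_eq[OF vw])
    fix z z' assume "z \<in> {1..n}" "z' \<in> {1..n}" "wl_entry n G ?t v z = wl_entry n H ?t w z'"
    moreover have "wl n G ?t v = wl n H ?t w" using vw by (simp add: wl_Suc_conv)
    ultimately show "sem n G (\<lambda>_. z) \<phi> = sem n H (\<lambda>_. z') \<phi>"
      using sem_eq_if_wl_entry_eq[OF G H vars order.refl v w, where \<tau> = "\<lambda>_. k"] v w
      by (simp add: closed tuples_def nth_append)
  qed
  also have "\<dots> = real n * closed_val n H \<phi>"
    by (simp add: val)
  finally show ?thesis using n by simp
qed

lemma sem_eq_if_closed_sums_eq:
  assumes sums: "\<And>x \<psi> \<nu> \<mu>. vars (Sum x \<psi>) \<subseteq> S \<Longrightarrow> free \<psi> \<subseteq> {x} \<Longrightarrow> sd \<psi> \<le> t \<Longrightarrow>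
      sem n G \<nu> (Sum x \<psi>) = sem n H \<mu> (Sum x \<psi>)"
  shows "vars \<phi> \<subseteq> S \<Longrightarrow> free \<phi> = {} \<Longrightarrow> sd \<phi> \<le> Suc t \<Longrightarrow> sem n G \<nu> \<phi> = sem n H \<mu> \<phi>"
proof (induction \<phi> arbitrary: \<nu> \<mu>)
  case (Mul a b)
  have "sem n G \<nu> a = sem n H \<mu> a" "sem n G \<nu> b = sem n H \<mu> b"
    by (rule Mul.IH(1), use Mul.prems in auto) (rule Mul.IH(2), use Mul.prems in auto)
  then show ?case by simp
next
  case (Add a b)
  have "sem n G \<nu> a = sem n H \<mu> a" "sem n G \<nu> b = sem n H \<mu> b"
    by (rule Add.IH(1), use Add.prems in auto) (rule Add.IH(2), use Add.prems in auto)
  then show ?case by simp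
next
  case (Scal c a)
  have "sem n G \<nu> a = sem n H \<mu> a" by (rule Scal.IH) (use Scal.prems in auto)
  then show ?case by simp
next
  case (App f as)
  have "sem n G \<nu> a = sem n H \<mu> a" if a: "a \<in> set as" for a
    by (rule App.IH[OF a]) (use App.prems(1,2) App.prems(3)[unfolded sd_App_le_iff] a in auto)
  then show ?case by (simp cong: map_cong)
next
  case (Sum x \<psi>)
  then show ?case by (intro sums) auto
qed simp_all

lemma gwl_one_conv: "gwl n G 1 t = image_mset (\<lambda>u. wl n G t [u]) (mset_set {1..n})"
proof -
  have "tuples n 1 = (\<lambda>u. [u]) ` {1..n}"
    unfolding tuples_def by (auto simp: length_Suc_conv)
  then have "mset_set (tuples n 1) = image_mset (\<lambda>u. [u]) (mset_set {1..n})"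
    by (simp add: image_mset_mset_set inj_on_def)
  then show ?thesis unfolding gwl_def by (simp add: multiset.map_comp comp_def)
qed

lemma wl_entry_eq_if_wl_singleton_eq:
  assumes G: "G \<in> graphs n l" and H: "H \<in> graphs n l" and eq: "wl n G t [u] = wl n H t [u']"
  shows "wl_entry n G t [u] u = wl_entry n H t [u'] u'"
proof -
  have "col G u = col H u'" using atp_eq_imp_nth[OF G H wl_eq_imp_atp_eq[OF eq], of 0 0] by simp
  moreover have "atp X [a, a] = ([(True, {a} \<in> edges X)], [col X a, col X a])" for X a
    by (simp add: atp_def upt_rec)
  ultimately have "atp G [u, u] = atp H [u', u']"
    using singleton_notin_edges[OF G, of u] singleton_notin_edges[OF H, of u'] by simp
  then show ?thesis using eq by (simp add: wl_entry_eq_iff)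
qed

lemma closed_val_eq_if_gwl_one_eq:
  assumes G: "G \<in> graphs n l" and H: "H \<in> graphs n l" and gwl: "gwl n G 1 t = gwl n H 1 t"
    and "vars \<phi> \<subseteq> {1..2}" "free \<phi> = {}" "sd \<phi> \<le> Suc t"
  shows "closed_val n G \<phi> = closed_val n H \<phi>"
  unfolding closed_val_def
proof (rule sem_eq_if_closed_sums_eq[OF _ assms(4-6)])
  fix x \<psi> \<nu> \<mu> assume vars: "vars (Sum x \<psi>) \<subseteq> {1..2}" and free: "free \<psi> \<subseteq> {x}" and sd: "sd \<psi> \<le> t"
  have val: "sem n X (\<rho>(x := u)) \<psi> = sem n X (\<lambda>_. u) \<psi>" for X \<rho> u
    by (rule sem_cong_free) (use free in auto)
  have "(\<Sum>u\<in>{1..n}. sem n G (\<lambda>_. u) \<psi>) = (\<Sum>u\<in>{1..n}. sem n H (\<lambda>_. u) \<psi>)"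
  proof (rule sum_eq_if_image_mset_eq[where f = "\<lambda>u. wl n G t [u]" and g = "\<lambda>u. wl n H t [u]"])
    fix u u' assume u: "u \<in> {1..n}" "u' \<in> {1..n}" and eq: "wl n G t [u] = wl n H t [u']"
    have "[u] \<in> tuples n 1" "[u'] \<in> tuples n 1" using u by (simp_all add: tuples_def)
    then show "sem n G (\<lambda>_. u) \<psi> = sem n H (\<lambda>_. u') \<psi>"
      using sem_eq_if_wl_entry_eq[OF G H _ sd _ _ u eq wl_entry_eq_if_wl_singleton_eq[OF G H eq],
          where k = 1 and \<tau> = "\<lambda>_. 1"] vars
      by (simp add: numeral_2_eq_2)
  qed (use gwl[unfolded gwl_one_conv] in simp_all)
  then show "sem n G \<nu> (Sum x \<psi>) = sem n H \<mu> (Sum x \<psi>)" by (simp add: val)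
qed

section \<open>Colour refinement bounds the distinguishing power of \<open>TL\<^sub>2\<close>\<close>

lemma image_mset_vertex_split:
  assumes loop: "{a} \<notin> edges G" and a: "a \<in> {1..n}"
  shows "image_mset (\<lambda>u. (u = a, {a, u} \<in> edges G, f u)) (mset_set {1..n}) =
    add_mset (True, False, f a)
      (image_mset (\<lambda>c. (False, True, c)) (image_mset f (mset_set (nbrs n G a))) +
       image_mset (\<lambda>c. (False, False, c))
         (image_mset f (mset_set {1..n}) - image_mset f (mset_set (nbrs n G a)) - {#f a#}))"
proof -
  let ?N = "nbrs n G a" and ?R = "{1..n} - nbrs n G a - {a}"
  have aN: "a \<notin> ?N" using loop unfolding nbrs_def by auto
  have V: "{1..n} = {a} \<union> (?N \<union> ?R)" using a nbrs_subset[of n G a] by auto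
  have "mset_set (?N \<union> ?R) = mset_set ?N + mset_set ?R" by (rule mset_set_Union) auto
  moreover have "mset_set ({a} \<union> (?N \<union> ?R)) = mset_set {a} + mset_set (?N \<union> ?R)"
    by (rule mset_set_Union) (use aN in auto)
  ultimately have split: "mset_set {1..n} = add_mset a (mset_set ?N + mset_set ?R)"
    by (simp only: V[symmetric]) simp
  have N: "image_mset (\<lambda>u. (u = a, {a, u} \<in> edges G, f u)) (mset_set ?N) =
      image_mset (\<lambda>c. (False, True, c)) (image_mset f (mset_set ?N))"
    using aN by (auto simp: multiset.map_comp nbrs_def insert_commute intro!: image_mset_cong)
  have R: "image_mset (\<lambda>u. (u = a, {a, u} \<in> edges G, f u)) (mset_set ?R) =
      image_mset (\<lambda>c. (False, False, c)) (image_mset f (mset_set ?R))"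
    by (auto simp: multiset.map_comp nbrs_def insert_commute intro!: image_mset_cong)
  have "image_mset f (mset_set {1..n}) - image_mset f (mset_set ?N) - {#f a#} = image_mset f (mset_set ?R)"
    unfolding split by simp
  then show ?thesis unfolding split using N R loop by simp
qed

lemma sem_eq_if_cr_eq:
  assumes G: "G \<in> graphs n l" and H: "H \<in> graphs n l" and gcr: "gcr n G t = gcr n H t"
  shows "vars \<phi> \<subseteq> {1..2} \<Longrightarrow> sd \<phi> \<le> d \<Longrightarrow> d \<le> Suc t \<Longrightarrow>
    \<forall>x\<in>free \<phi>. \<nu> x \<in> {1..n} \<and> \<mu> x \<in> {1..n} \<and> cr n G d (\<nu> x) = cr n H d (\<mu> x) \<Longrightarrow>
    \<forall>x\<in>free \<phi>. \<forall>y\<in>free \<phi>. (\<nu> x = \<nu> y \<longleftrightarrow> \<mu> x = \<mu> y) \<and>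
       ({\<nu> x, \<nu> y} \<in> edges G \<longleftrightarrow> {\<mu> x, \<mu> y} \<in> edges H) \<Longrightarrow>
    sem n G \<nu> \<phi> = sem n H \<mu> \<phi>"
proof (induction \<phi> arbitrary: d \<nu> \<mu>)
  case (Lab s x)
  then show ?case by (auto dest: cr_eq_imp_col_eq)
next
  case (Mul a b)
  have "sem n G \<nu> a = sem n H \<mu> a" "sem n G \<nu> b = sem n H \<mu> b"
    by (rule Mul.IH(1), use Mul.prems in auto) (rule Mul.IH(2), use Mul.prems in auto)
  then show ?case by simp
next
  case (Add a b)
  have "sem n G \<nu> a = sem n H \<mu> a" "sem n G \<nu> b = sem n H \<mu> b"
    by (rule Add.IH(1), use Add.prems in auto) (rule Add.IH(2), use Add.prems in auto)
  then show ?case by simp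
next
  case (Scal c a)
  have "sem n G \<nu> a = sem n H \<mu> a" by (rule Scal.IH) (use Scal.prems in auto)
  then show ?case by simp
next
  case (App f as)
  have "sem n G \<nu> a = sem n H \<mu> a" if a: "a \<in> set as" for a
    by (rule App.IH[OF a]) (use App.prems(1,3-) App.prems(2)[unfolded sd_App_le_iff] a in auto)
  then show ?case by (simp cong: map_cong)
next
  case (Sum x \<psi>)
  note prems = Sum.prems
  obtain d' where d: "d = Suc d'" "sd \<psi> \<le> d'" using prems(2) by (cases d) auto
  have gcr': "gcr n G d' = gcr n H d'" using gcr_eq_le[OF gcr] prems(3) d(1) by simp
  have IH: "sem n G \<nu>' \<psi> = sem n H \<mu>' \<psi>"
    if "\<forall>z\<in>free \<psi>. \<nu>' z \<in> {1..n} \<and> \<mu>' z \<in> {1..n} \<and> cr n G d' (\<nu>' z) = cr n H d' (\<mu>' z)"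
      "\<forall>z\<in>free \<psi>. \<forall>z'\<in>free \<psi>. (\<nu>' z = \<nu>' z' \<longleftrightarrow> \<mu>' z = \<mu>' z') \<and>
         ({\<nu>' z, \<nu>' z'} \<in> edges G \<longleftrightarrow> {\<mu>' z, \<mu>' z'} \<in> edges H)" for \<nu>' \<mu>'
    using Sum.IH[OF _ d(2) _ that] prems(1,3) d(1) by simp
  show ?case
  proof (cases "free \<psi> \<subseteq> {x}")
    case True
    have "(\<Sum>u\<in>{1..n}. sem n G (\<nu>(x := u)) \<psi>) = (\<Sum>u\<in>{1..n}. sem n H (\<mu>(x := u)) \<psi>)"
    proof (rule sum_eq_if_image_mset_eq[where f = "cr n G d'" and g = "cr n H d'"])
      fix u u' assume "u \<in> {1..n}" "u' \<in> {1..n}" "cr n G d' u = cr n H d' u'"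
      then show "sem n G (\<nu>(x := u)) \<psi> = sem n H (\<mu>(x := u')) \<psi>"
        using True singleton_notin_edges[OF G, of u] singleton_notin_edges[OF H, of u'] by (intro IH) auto
    qed (use gcr' in \<open>simp_all add: gcr_def\<close>)
    then show ?thesis by simp
  next
    case False
    then obtain y where y: "y \<in> free \<psi>" "y \<noteq> x" by auto
    have "y \<in> {1..2}" "x \<in> {1..2}" using y(1) free_subset_vars[of \<psi>] prems(1) by auto
    then have free: "free \<psi> \<subseteq> {x, y}" using y(2) free_subset_vars[of \<psi>] prems(1) by auto
    let ?a = "\<nu> y" and ?b = "\<mu> y"
    have ab: "?a \<in> {1..n}" "?b \<in> {1..n}" "cr n G (Suc d') ?a = cr n H (Suc d') ?b"
      using prems(4) y d(1) by auto
    then have ab': "cr n G d' ?a = cr n H d' ?b"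
      "image_mset (cr n G d') (mset_set (nbrs n G ?a)) = image_mset (cr n H d') (mset_set (nbrs n H ?b))"
      by simp_all
    have "image_mset (\<lambda>u. (u = ?a, {?a, u} \<in> edges G, cr n G d' u)) (mset_set {1..n}) =
          image_mset (\<lambda>u. (u = ?b, {?b, u} \<in> edges H, cr n H d' u)) (mset_set {1..n})"
      unfolding image_mset_vertex_split[OF singleton_notin_edges[OF G] ab(1)]
        image_mset_vertex_split[OF singleton_notin_edges[OF H] ab(2)] ab'
        gcr'[unfolded gcr_def] ..
    then have "(\<Sum>u\<in>{1..n}. sem n G (\<nu>(x := u)) \<psi>) = (\<Sum>u\<in>{1..n}. sem n H (\<mu>(x := u)) \<psi>)"
    proof (rule sum_eq_if_image_mset_eq[rotated 2])
      fix u u' assume u: "u \<in> {1..n}" "u' \<in> {1..n}"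
        and "(u = ?a, {?a, u} \<in> edges G, cr n G d' u) = (u' = ?b, {?b, u'} \<in> edges H, cr n H d' u')"
      then have match: "u = ?a \<longleftrightarrow> u' = ?b" "{?a, u} \<in> edges G \<longleftrightarrow> {?b, u'} \<in> edges H"
        "cr n G d' u = cr n H d' u'" by simp_all
      show "sem n G (\<nu>(x := u)) \<psi> = sem n H (\<mu>(x := u')) \<psi>"
      proof (rule IH)
        show "\<forall>z\<in>free \<psi>. (\<nu>(x := u)) z \<in> {1..n} \<and> (\<mu>(x := u')) z \<in> {1..n} \<and>
            cr n G d' ((\<nu>(x := u)) z) = cr n H d' ((\<mu>(x := u')) z)"
          using free u match(3) ab ab'(1) y(2) by auto
        have "\<forall>z\<in>{x, y}. \<forall>z'\<in>{x, y}. ((\<nu>(x := u)) z = (\<nu>(x := u)) z' \<longleftrightarrow> (\<mu>(x := u')) z = (\<mu>(x := u')) z') \<and>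
            ({(\<nu>(x := u)) z, (\<nu>(x := u)) z'} \<in> edges G \<longleftrightarrow> {(\<mu>(x := u')) z, (\<mu>(x := u')) z'} \<in> edges H)"
          using match(1,2) y(2) singleton_notin_edges[OF G] singleton_notin_edges[OF H] by (auto simp: insert_commute)
        then show "\<forall>z\<in>free \<psi>. \<forall>z'\<in>free \<psi>. ((\<nu>(x := u)) z = (\<nu>(x := u)) z' \<longleftrightarrow> (\<mu>(x := u')) z = (\<mu>(x := u')) z') \<and>
            ({(\<nu>(x := u)) z, (\<nu>(x := u)) z'} \<in> edges G \<longleftrightarrow> {(\<mu>(x := u')) z, (\<mu>(x := u')) z'} \<in> edges H)"
          using free by blast
      qed
    qed simp_all
    then show ?thesis by simp
  qed
qed simp_all

lemma closed_val_eq_if_gcr_eq: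
  assumes G: "G \<in> graphs n l" and H: "H \<in> graphs n l" and gcr: "gcr n G t = gcr n H t"
    and "vars \<phi> \<subseteq> {1..2}" "free \<phi> = {}" "sd \<phi> \<le> Suc t"
  shows "closed_val n G \<phi> = closed_val n H \<phi>"
  unfolding closed_val_def by (rule sem_eq_if_cr_eq[OF G H gcr]) (use assms in auto)

section \<open>Indicator expressions\<close>

text \<open>The variable \<open>x\<close> only serves to express the constant \<open>1\<close> as \<open>1\<^sub>x\<^sub>=\<^sub>x\<close>.\<close>

definition tl_one :: "nat \<Rightarrow> tl" where
  "tl_one x = EqI x x"

definition tl_prod :: "nat \<Rightarrow> tl list \<Rightarrow> tl" where
  "tl_prod x es = foldr Mul es (tl_one x)"

lemma sem_tl_one [simp]: "sem n G \<nu> (tl_one x) = 1"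
  by (simp add: tl_one_def)

lemma tl_one_mem_TLd [simp]: "tl_one x \<in> TLd \<Omega> l k t \<longleftrightarrow> x \<in> {1..k}"
  by (simp add: tl_one_def)

lemma free_tl_one [simp]: "free (tl_one x) = {x}"
  by (simp add: tl_one_def)

lemma sem_tl_prod: "sem n G \<nu> (tl_prod x es) = prod_list (map (sem n G \<nu>) es)"
  unfolding tl_prod_def by (induction es) auto

lemma sem_tl_prod_of_bool:
  "(\<And>r. r \<in> set rs \<Longrightarrow> sem n G \<nu> (e r) = of_bool (P r)) \<Longrightarrow>
    sem n G \<nu> (tl_prod x (map e rs)) = of_bool (\<forall>r\<in>set rs. P r)"
  unfolding sem_tl_prod by (induction rs) auto

lemma tl_prod_mem_TLd:
  "x \<in> {1..k} \<Longrightarrow> (\<And>e. e \<in> set es \<Longrightarrow> e \<in> TLd \<Omega> l k t) \<Longrightarrow> tl_prod x es \<in> TLd \<Omega> l k t"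
  unfolding tl_prod_def by (induction es) auto

lemma free_tl_prod: "free (tl_prod x es) = insert x (\<Union>e\<in>set es. free e)"
  unfolding tl_prod_def by (induction es) auto

text \<open>The Lagrange basis polynomial of the node \<open>r\<close> among the nodes \<open>rs\<close>, applied to \<open>e\<close>.\<close>

definition tl_indicator :: "nat \<Rightarrow> tl \<Rightarrow> real \<Rightarrow> real list \<Rightarrow> tl" where
  "tl_indicator x e r rs =
     tl_prod x (map (\<lambda>r'. Scal (1 / (r - r')) (Add e (Scal (- r') (tl_one x)))) (filter (\<lambda>r'. r' \<noteq> r) rs))"

lemma sem_tl_indicator:
  assumes "sem n G \<nu> e \<in> set rs"
  shows "sem n G \<nu> (tl_indicator x e r rs) = of_bool (sem n G \<nu> e = r)"
proof (cases "sem n G \<nu> e = r")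
  case True
  then have "map (sem n G \<nu>) (map (\<lambda>r'. Scal (1 / (r - r')) (Add e (Scal (- r') (tl_one x))))
      (filter (\<lambda>r'. r' \<noteq> r) rs)) = map (\<lambda>_. 1) (filter (\<lambda>r'. r' \<noteq> r) rs)"
    by simp
  then show ?thesis
    unfolding tl_indicator_def sem_tl_prod using True by (simp add: map_replicate_const)
next
  case False
  then have "sem n G \<nu> e \<in> set (filter (\<lambda>r'. r' \<noteq> r) rs)" using assms by simp
  then show ?thesis
    unfolding tl_indicator_def sem_tl_prod using False by (force simp: prod_list_zero_iff)
qed

lemma tl_indicator_mem_TLd:
  "x \<in> {1..k} \<Longrightarrow> e \<in> TLd \<Omega> l k t \<Longrightarrow> tl_indicator x e r rs \<in> TLd \<Omega> l k t"
  unfolding tl_indicator_def by (rule tl_prod_mem_TLd) auto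

lemma free_tl_indicator: "free (tl_indicator x e r rs) \<subseteq> insert x (free e)"
  unfolding tl_indicator_def free_tl_prod by auto

definition tl_col_indicator :: "nat \<Rightarrow> nat \<Rightarrow> (nat \<Rightarrow> real) \<Rightarrow> (nat \<Rightarrow> real) list \<Rightarrow> tl" where
  "tl_col_indicator l x c cs =
     tl_prod x (map (\<lambda>s. tl_indicator x (Lab s x) (c s) (map (\<lambda>d. d s) cs)) [1..<Suc l])"

lemma sem_tl_col_indicator:
  assumes G: "G \<in> graphs n l" and K: "K \<in> graphs n l" and cs: "col G (\<nu> x) \<in> set cs"
  shows "sem n G \<nu> (tl_col_indicator l x (col K w) cs) = of_bool (col G (\<nu> x) = col K w)"
proof -
  have "sem n G \<nu> (tl_col_indicator l x (col K w) cs) = of_bool (\<forall>s\<in>set [1..<Suc l]. col G (\<nu> x) s = col K w s)"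
    unfolding tl_col_indicator_def
    by (rule sem_tl_prod_of_bool) (use cs in \<open>simp add: sem_tl_indicator\<close>)
  moreover have "set [1..<Suc l] = {1..l}" by auto
  ultimately show ?thesis by (simp only: col_eq_iff_labels_eq[OF G K])
qed

lemma tl_col_indicator_mem_TLd: "x \<in> {1..k} \<Longrightarrow> tl_col_indicator l x c cs \<in> TLd \<Omega> l k t"
  unfolding tl_col_indicator_def by (auto intro!: tl_prod_mem_TLd tl_indicator_mem_TLd)

definition tl_atp_indicator :: "nat \<Rightarrow> (nat \<Rightarrow> real) list \<Rightarrow> graph \<Rightarrow> nat list \<Rightarrow> tl" where
  "tl_atp_indicator l cs K ws = Mul
     (tl_prod 1 (map (\<lambda>(i, j).
        Mul (if ws ! i = ws ! j then EqI (Suc i) (Suc j) else NeqI (Suc i) (Suc j))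
            (if {ws ! i, ws ! j} \<in> edges K then EdgeA (Suc i) (Suc j)
             else Add (tl_one 1) (Scal (- 1) (EdgeA (Suc i) (Suc j)))))
        (index_pairs (length ws))))
     (tl_prod 1 (map (\<lambda>i. tl_col_indicator l (Suc i) (col K (ws ! i)) cs) [0..<length ws]))"

lemma sem_tl_atp_indicator:
  assumes G: "G \<in> graphs n l" and K: "K \<in> graphs n l" and len: "length vs = length ws"
    and \<nu>: "\<forall>i<length vs. \<nu> (Suc i) = vs ! i" and cs: "\<forall>i<length vs. col G (vs ! i) \<in> set cs"
  shows "sem n G \<nu> (tl_atp_indicator l cs K ws) = of_bool (atp G vs = atp K ws)"
proof -
  have pairs: "sem n G \<nu> (tl_prod 1 (map (\<lambda>(i, j).
        Mul (if ws ! i = ws ! j then EqI (Suc i) (Suc j) else NeqI (Suc i) (Suc j))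
            (if {ws ! i, ws ! j} \<in> edges K then EdgeA (Suc i) (Suc j)
             else Add (tl_one 1) (Scal (- 1) (EdgeA (Suc i) (Suc j)))))
        (index_pairs (length ws)))) =
      of_bool (\<forall>(i, j)\<in>set (index_pairs (length ws)). (vs ! i = vs ! j \<longleftrightarrow> ws ! i = ws ! j) \<and>
        ({vs ! i, vs ! j} \<in> edges G \<longleftrightarrow> {ws ! i, ws ! j} \<in> edges K))"
  proof (rule sem_tl_prod_of_bool)
    fix p assume "p \<in> set (index_pairs (length ws))"
    then obtain i j where "p = (i, j)" "i < length vs" "j < length vs"
      using len unfolding set_index_pairs by auto
    then show "sem n G \<nu> ((\<lambda>(i, j).
        Mul (if ws ! i = ws ! j then EqI (Suc i) (Suc j) else NeqI (Suc i) (Suc j))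
            (if {ws ! i, ws ! j} \<in> edges K then EdgeA (Suc i) (Suc j)
             else Add (tl_one 1) (Scal (- 1) (EdgeA (Suc i) (Suc j))))) p) =
      of_bool ((\<lambda>(i, j). (vs ! i = vs ! j \<longleftrightarrow> ws ! i = ws ! j) \<and>
        ({vs ! i, vs ! j} \<in> edges G \<longleftrightarrow> {ws ! i, ws ! j} \<in> edges K)) p)"
      using \<nu> by auto
  qed
  have labels: "sem n G \<nu> (tl_prod 1 (map (\<lambda>i. tl_col_indicator l (Suc i) (col K (ws ! i)) cs) [0..<length ws])) =
      of_bool (\<forall>i\<in>set [0..<length ws]. col G (vs ! i) = col K (ws ! i))"
    by (rule sem_tl_prod_of_bool) (use \<nu> cs len in \<open>simp add: sem_tl_col_indicator[OF G K]\<close>)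
  show ?thesis
    unfolding tl_atp_indicator_def sem.simps pairs labels atp_eq_iff[OF len] set_index_pairs
    using len by auto
qed

lemma tl_atp_indicator_mem_TLd:
  "1 \<le> k \<Longrightarrow> length ws \<le> k \<Longrightarrow> tl_atp_indicator l cs K ws \<in> TLd \<Omega> l k t"
  unfolding tl_atp_indicator_def
  by (auto simp: set_index_pairs intro!: tl_prod_mem_TLd tl_col_indicator_mem_TLd)

definition tl_mset_indicator ::
    "nat \<Rightarrow> nat \<Rightarrow> ('r \<Rightarrow> tl) \<Rightarrow> ('r \<Rightarrow> 'c) \<Rightarrow> 'c multiset \<Rightarrow> 'r list \<Rightarrow> tl" where
  "tl_mset_indicator n x e key M rs =
     tl_prod x (map (\<lambda>r. tl_indicator x (e r) (real (count M (key r))) (map real [0..<Suc n])) rs)"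

lemma sem_tl_mset_indicator:
  assumes e: "\<And>r. r \<in> set rs \<Longrightarrow> sem n G \<nu> (e r) = real (count N (key r))"
    and size: "size N \<le> n"
    and keys: "set_mset N \<subseteq> key ` set rs" "set_mset M \<subseteq> key ` set rs"
  shows "sem n G \<nu> (tl_mset_indicator n x e key M rs) = of_bool (N = M)"
proof -
  have "sem n G \<nu> (tl_mset_indicator n x e key M rs) = of_bool (\<forall>r\<in>set rs. count N (key r) = count M (key r))"
    unfolding tl_mset_indicator_def
  proof (rule sem_tl_prod_of_bool)
    fix r assume r: "r \<in> set rs"
    have "count N (key r) \<in> set [0..<Suc n]" using count_le_size[of N "key r"] size by auto
    then have "sem n G \<nu> (e r) \<in> set (map real [0..<Suc n])" unfolding e[OF r] set_map by (rule imageI)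
    then show "sem n G \<nu> (tl_indicator x (e r) (real (count M (key r))) (map real [0..<Suc n])) =
        of_bool (count N (key r) = count M (key r))"
      by (simp add: sem_tl_indicator e[OF r])
  qed
  also have "(\<forall>r\<in>set rs. count N (key r) = count M (key r)) \<longleftrightarrow> N = M"
    using multiset_eq_iff_count_eq_on[OF keys] by simp
  finally show ?thesis .
qed

lemma tl_mset_indicator_mem_TLd:
  "x \<in> {1..k} \<Longrightarrow> (\<And>r. r \<in> set rs \<Longrightarrow> e r \<in> TLd \<Omega> l k t) \<Longrightarrow>
    tl_mset_indicator n x e key M rs \<in> TLd \<Omega> l k t"
  unfolding tl_mset_indicator_def by (auto intro!: tl_prod_mem_TLd tl_indicator_mem_TLd)

lemma free_tl_mset_indicator:
  "(\<And>r. r \<in> set rs \<Longrightarrow> free (e r) \<subseteq> X) \<Longrightarrow> x \<in> X \<Longrightarrow> free (tl_mset_indicator n x e key M rs) \<subseteq> X"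
  unfolding tl_mset_indicator_def free_tl_prod using free_tl_indicator by fastforce

text \<open>Swapping \<open>x\<^sub>1\<close> and \<open>x\<^sub>2\<close> lets \<open>\<phi>\<close> speak about the neighbour \<open>x\<^sub>2\<close> while reusing \<open>x\<^sub>1\<close> as its
  bound variable, so two variables suffice.\<close>

definition tl_nbr_count :: "tl \<Rightarrow> tl" where
  "tl_nbr_count \<phi> = Sum 2 (Mul (EdgeA 1 2) (rename (Transposition.transpose 1 2) \<phi>))"

lemma sem_tl_nbr_count:
  assumes \<phi>: "\<And>\<nu>'. \<nu>' 1 \<in> {1..n} \<Longrightarrow> sem n G \<nu>' \<phi> = of_bool (f (\<nu>' 1) = c)"
  shows "sem n G \<nu> (tl_nbr_count \<phi>) = real (count (image_mset f (mset_set (nbrs n G (\<nu> 1)))) c)"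
proof -
  have "sem n G \<nu> (tl_nbr_count \<phi>) = (\<Sum>u\<in>{1..n}. if u \<in> nbrs n G (\<nu> 1) then of_bool (f u = c) else 0)"
    unfolding tl_nbr_count_def sem.simps sem_rename[OF inj_transpose]
    by (intro sum.cong refl) (auto simp: \<phi> nbrs_def insert_commute)
  also have "\<dots> = (\<Sum>u\<in>{u \<in> {1..n}. u \<in> nbrs n G (\<nu> 1)}. of_bool (f u = c))"
    by (rule sum.inter_filter[symmetric]) simp
  also have "{u \<in> {1..n}. u \<in> nbrs n G (\<nu> 1)} = nbrs n G (\<nu> 1)"
    using nbrs_subset by blast
  also have "(\<Sum>u\<in>nbrs n G (\<nu> 1). of_bool (f u = c)) = real (count (image_mset f (mset_set (nbrs n G (\<nu> 1)))) c)"
    by (rule sum_of_bool_eq_count) simp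
  finally show ?thesis .
qed

lemma tl_nbr_count_mem_TLd: "\<phi> \<in> TLd \<Omega> l 2 t \<Longrightarrow> tl_nbr_count \<phi> \<in> TLd \<Omega> l 2 (Suc t)"
  unfolding tl_nbr_count_def by (auto intro!: rename_mem_TLd simp: transpose_def)

lemma free_tl_nbr_count: "free \<phi> \<subseteq> {1} \<Longrightarrow> free (tl_nbr_count \<phi>) \<subseteq> {1}"
  unfolding tl_nbr_count_def by (auto simp: free_rename inj_transpose)

text \<open>The variable \<open>x\<^sub>k\<^sub>+\<^sub>1\<close> ranges over the new vertex; transposing \<open>x\<^sub>i\<^sub>+\<^sub>1\<close> and \<open>x\<^sub>k\<^sub>+\<^sub>1\<close> evaluates
  the colour indicator on the tuple in which the \<open>i\<close>-th entry is replaced by the new vertex.\<close>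

definition tl_wl_entry_count ::
    "nat \<Rightarrow> (nat \<Rightarrow> real) list \<Rightarrow> nat \<Rightarrow> (nat list \<Rightarrow> tl) \<Rightarrow> graph \<Rightarrow> nat list \<Rightarrow> nat \<Rightarrow> tl" where
  "tl_wl_entry_count l cs k ind K z u =
     Sum (Suc k) (Mul (tl_atp_indicator l cs K (z @ [u]))
       (tl_prod 1 (map (\<lambda>i. rename (Transposition.transpose (Suc i) (Suc k)) (ind (z[i := u]))) [0..<k])))"

lemma sem_tl_wl_entry_count:
  assumes G': "G' \<in> graphs n l" and K: "K \<in> graphs n l"
    and vs: "vs \<in> tuples n k" and z: "z \<in> tuples n k" and u: "u \<in> {1..n}"
    and \<nu>: "\<forall>i<k. \<nu> (Suc i) = vs ! i"
    and cs: "\<And>v. v \<in> {1..n} \<Longrightarrow> col G' v \<in> set cs"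
    and ind: "\<And>\<nu>' vs' zs. vs' \<in> tuples n k \<Longrightarrow> zs \<in> tuples n k \<Longrightarrow> \<forall>i<k. \<nu>' (Suc i) = vs' ! i \<Longrightarrow>
        sem n G' \<nu>' (ind zs) = of_bool (wl n G' t vs' = wl n K t zs)"
  shows "sem n G' \<nu> (tl_wl_entry_count l cs k ind K z u) =
    real (count (image_mset (wl_entry n G' t vs) (mset_set {1..n})) (wl_entry n K t z u))"
proof -
  have lens: "length vs = k" "length z = k" using vs z by (auto simp: tuples_def)
  have "sem n G' \<nu> (tl_wl_entry_count l cs k ind K z u) =
      (\<Sum>u'\<in>{1..n}. of_bool (wl_entry n G' t vs u' = wl_entry n K t z u))"
    unfolding tl_wl_entry_count_def sem.simps(9)
  proof (rule sum.cong[OF refl])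
    fix u' assume u': "u' \<in> {1..n}"
    let ?\<nu> = "\<nu>(Suc k := u')"
    have "sem n G' ?\<nu> (tl_atp_indicator l cs K (z @ [u])) = of_bool (atp G' (vs @ [u']) = atp K (z @ [u]))"
    proof (rule sem_tl_atp_indicator[OF G' K])
      show "\<forall>i<length (vs @ [u']). ?\<nu> (Suc i) = (vs @ [u']) ! i"
        using \<nu> lens(1) by (auto simp: nth_append less_Suc_eq)
      show "\<forall>i<length (vs @ [u']). col G' ((vs @ [u']) ! i) \<in> set cs"
        using lens(1) nth_in_tuples[OF vs] u' cs by (auto simp: nth_append less_Suc_eq)
    qed (simp add: lens)
    moreover have "sem n G' ?\<nu> (tl_prod 1 (map (\<lambda>i. rename (Transposition.transpose (Suc i) (Suc k))
        (ind (z[i := u]))) [0..<k])) = of_bool (\<forall>i\<in>set [0..<k]. wl n G' t (vs[i := u']) = wl n K t (z[i := u]))"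
    proof (rule sem_tl_prod_of_bool)
      fix i assume i: "i \<in> set [0..<k]"
      have "\<forall>j<k. (?\<nu> \<circ> Transposition.transpose (Suc i) (Suc k)) (Suc j) = (vs[i := u']) ! j"
        using i \<nu> lens(1) by (auto simp: transpose_def)
      then show "sem n G' ?\<nu> (rename (Transposition.transpose (Suc i) (Suc k)) (ind (z[i := u]))) =
          of_bool (wl n G' t (vs[i := u']) = wl n K t (z[i := u]))"
        unfolding sem_rename[OF inj_transpose] by (rule ind[OF tuples_update[OF vs u'] tuples_update[OF z u]])
    qed
    ultimately show "sem n G' ?\<nu> (Mul (tl_atp_indicator l cs K (z @ [u])) (tl_prod 1 (map (\<lambda>i.
        rename (Transposition.transpose (Suc i) (Suc k)) (ind (z[i := u]))) [0..<k]))) =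
        of_bool (wl_entry n G' t vs u' = wl_entry n K t z u)"
      using lens by (auto simp: wl_entry_eq_iff)
  qed
  also have "\<dots> = real (count (image_mset (wl_entry n G' t vs) (mset_set {1..n})) (wl_entry n K t z u))"
    by (rule sum_of_bool_eq_count) simp
  finally show ?thesis .
qed

lemma tl_wl_entry_count_mem_TLd:
  assumes "1 \<le> k" "length z = k" and ind: "\<And>zs. length zs = k \<Longrightarrow> ind zs \<in> TLd \<Omega> l (Suc k) t"
  shows "tl_wl_entry_count l cs k ind K z u \<in> TLd \<Omega> l (Suc k) (Suc t)"
proof -
  have "rename (Transposition.transpose (Suc i) (Suc k)) (ind (z[i := u])) \<in> TLd \<Omega> l (Suc k) t" if "i < k" for i
    by (rule rename_mem_TLd[OF ind]) (use that assms(2) in auto)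
  then show ?thesis
    unfolding tl_wl_entry_count_def using assms(1,2) by (auto intro!: tl_atp_indicator_mem_TLd tl_prod_mem_TLd)
qed

lemma free_tl_wl_entry_count:
  assumes "1 \<le> k" "length z = k" and ind: "\<And>zs. length zs = k \<Longrightarrow> free (ind zs) \<subseteq> {1..k}"
  shows "free (tl_wl_entry_count l cs k ind K z u) \<subseteq> {1..k}"
proof -
  have "free (tl_atp_indicator l cs K (z @ [u])) \<subseteq> {1..Suc k}"
    using free_subset_if_mem_TLd[OF tl_atp_indicator_mem_TLd[of "Suc k" "z @ [u]"]] assms(2) by simp
  moreover have "(\<Union>e\<in>set (map (\<lambda>i. rename (Transposition.transpose (Suc i) (Suc k)) (ind (z[i := u])))
      [0..<k]). free e) \<subseteq> {1..Suc k}"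
  proof (rule UN_least)
    fix e assume "e \<in> set (map (\<lambda>i. rename (Transposition.transpose (Suc i) (Suc k)) (ind (z[i := u]))) [0..<k])"
    then obtain i where i: "i < k" "e = rename (Transposition.transpose (Suc i) (Suc k)) (ind (z[i := u]))"
      by auto
    have "free (ind (z[i := u])) \<subseteq> {1..Suc k}" using ind[of "z[i := u]"] assms(2) by auto
    moreover have "Transposition.transpose (Suc i) (Suc k) ` {1..Suc k} = {1..Suc k}"
      using i by simp
    ultimately show "free e \<subseteq> {1..Suc k}" unfolding i(2) free_rename[OF inj_transpose] by blast
  qed
  ultimately have "free (Mul (tl_atp_indicator l cs K (z @ [u])) (tl_prod 1 (map (\<lambda>i.
      rename (Transposition.transpose (Suc i) (Suc k)) (ind (z[i := u]))) [0..<k]))) \<subseteq> {1..Suc k}"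
    using assms(1) unfolding free.simps free_tl_prod by auto
  then show ?thesis unfolding tl_wl_entry_count_def by auto
qed

definition fun_upds :: "('a \<Rightarrow> 'b) \<Rightarrow> 'a list \<Rightarrow> 'b list \<Rightarrow> 'a \<Rightarrow> 'b" where
  "fun_upds f xs ys = foldl (\<lambda>g (x, y). g(x := y)) f (zip xs ys)"

lemma fun_upds_Nil [simp]: "fun_upds f [] ys = f"
  by (simp add: fun_upds_def)

lemma fun_upds_Cons_Cons [simp]: "fun_upds f (x # xs) (y # ys) = fun_upds (f(x := y)) xs ys"
  by (simp add: fun_upds_def)

lemma fun_upds_notin: "x \<notin> set xs \<Longrightarrow> fun_upds f xs ys x = f x"
proof (induction xs arbitrary: f ys)
  case (Cons x' xs)
  then show ?case by (cases ys) (simp_all add: fun_upds_def)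
qed simp

lemma fun_upds_nth:
  "distinct xs \<Longrightarrow> length ys = length xs \<Longrightarrow> i < length xs \<Longrightarrow> fun_upds f xs ys (xs ! i) = ys ! i"
proof (induction xs arbitrary: f ys i)
  case (Cons x xs)
  then obtain y ys' where "ys = y # ys'" by (cases ys) auto
  with Cons show ?case by (cases i) (auto simp: fun_upds_notin)
qed simp

lemma tuples_Suc: "tuples n (Suc k) = (\<lambda>(u, us). u # us) ` ({1..n} \<times> tuples n k)"
  unfolding tuples_def by (auto simp: length_Suc_conv image_iff)

lemma sem_foldr_Sum:
  "sem n G \<nu> (foldr Sum xs \<phi>) = (\<Sum>us\<in>tuples n (length xs). sem n G (fun_upds \<nu> xs us) \<phi>)"
proof (induction xs arbitrary: \<nu>)
  case Nil
  have "tuples n 0 = {[]}" unfolding tuples_def by auto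
  then show ?case by simp
next
  case (Cons x xs)
  have inj: "inj_on (\<lambda>(u, us). u # us) ({1..n} \<times> tuples n (length xs))"
    by (auto simp: inj_on_def)
  have "sem n G \<nu> (foldr Sum (x # xs) \<phi>) = (\<Sum>u\<in>{1..n}. sem n G (\<nu>(x := u)) (foldr Sum xs \<phi>))"
    by simp
  also have "\<dots> = (\<Sum>u\<in>{1..n}. \<Sum>us\<in>tuples n (length xs). sem n G (fun_upds \<nu> (x # xs) (u # us)) \<phi>)"
    by (simp only: Cons.IH fun_upds_Cons_Cons)
  also have "\<dots> = (\<Sum>(u, us)\<in>{1..n} \<times> tuples n (length xs). sem n G (fun_upds \<nu> (x # xs) (u # us)) \<phi>)"
    by (rule sum.cartesian_product)
  also have "\<dots> = (\<Sum>us\<in>tuples n (length (x # xs)). sem n G (fun_upds \<nu> (x # xs) us) \<phi>)"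
    unfolding length_Cons tuples_Suc sum.reindex[OF inj] by (simp add: case_prod_beta comp_def)
  finally show ?case .
qed

lemma closed_val_foldr_Sum:
  assumes "\<And>\<nu> vs. vs \<in> tuples n k \<Longrightarrow> \<forall>i<k. \<nu> (Suc i) = vs ! i \<Longrightarrow> sem n G \<nu> \<phi> = of_bool (f vs = c)"
  shows "closed_val n G (foldr Sum [1..<Suc k] \<phi>) = real (count (image_mset f (mset_set (tuples n k))) c)"
proof -
  have "closed_val n G (foldr Sum [1..<Suc k] \<phi>) = (\<Sum>vs\<in>tuples n k. of_bool (f vs = c))"
    unfolding closed_val_def sem_foldr_Sum
  proof (rule sum.cong)
    fix vs assume vs': "vs \<in> tuples n k"
    have "\<forall>i<k. fun_upds (\<lambda>_. 1) [1..<Suc k] vs (Suc i) = vs ! i"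
      using vs' fun_upds_nth[of "[1..<Suc k]" vs] by (auto simp: tuples_def simp del: upt_Suc)
    then show "sem n G (fun_upds (\<lambda>_. 1) [1..<Suc k] vs) \<phi> = of_bool (f vs = c)"
      by (rule assms[OF vs'])
  qed (simp del: upt_Suc)
  also have "\<dots> = real (count (image_mset f (mset_set (tuples n k))) c)"
    by (rule sum_of_bool_eq_count[OF finite_tuples])
  finally show ?thesis .
qed

lemma foldr_Sum_mem_TLd:
  "set xs \<subseteq> {1..k} \<Longrightarrow> \<phi> \<in> TLd \<Omega> l k t \<Longrightarrow> foldr Sum xs \<phi> \<in> TLd \<Omega> l k (length xs + t)"
  by (induction xs) auto

lemma free_foldr_Sum: "free (foldr Sum xs \<phi>) = free \<phi> - set xs"
  by (induction xs) auto

section \<open>\<open>TL\<close> bounds colour refinement and \<open>k\<close>-WL\<close>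

text \<open>An indicator only has to separate the finitely many labels, vertices and refinement
  entries occurring in \<open>G\<close> or \<open>H\<close>; these lists enumerate them.\<close>

definition label_list :: "nat \<Rightarrow> graph \<Rightarrow> graph \<Rightarrow> (nat \<Rightarrow> real) list" where
  "label_list n G H = [col K v. K \<leftarrow> [G, H], v \<leftarrow> [1..<Suc n]]"

lemma col_in_label_list: "K \<in> {G, H} \<Longrightarrow> v \<in> {1..n} \<Longrightarrow> col K v \<in> set (label_list n G H)"
  unfolding label_list_def by (auto simp del: upt_Suc)

definition vertex_list :: "nat \<Rightarrow> graph \<Rightarrow> graph \<Rightarrow> (graph \<times> nat) list" where
  "vertex_list n G H = List.product [G, H] [1..<Suc n]"

lemma set_vertex_list: "set (vertex_list n G H) = {G, H} \<times> {1..n}"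
  unfolding vertex_list_def set_product by auto

definition entry_list :: "nat \<Rightarrow> nat \<Rightarrow> graph \<Rightarrow> graph \<Rightarrow> (graph \<times> nat list \<times> nat) list" where
  "entry_list n k G H = List.product [G, H] (List.product (List.n_lists k [1..<Suc n]) [1..<Suc n])"

lemma set_entry_list: "set (entry_list n k G H) = {G, H} \<times> tuples n k \<times> {1..n}"
proof -
  have "set (List.n_lists k [1..<Suc n]) = tuples n k"
    unfolding tuples_def set_n_lists by auto
  then show ?thesis unfolding entry_list_def set_product by auto
qed

primrec cr_indicator :: "nat \<Rightarrow> nat \<Rightarrow> graph \<Rightarrow> graph \<Rightarrow> nat \<Rightarrow> graph \<Rightarrow> nat \<Rightarrow> tl" where
  "cr_indicator n l G H 0 K w = tl_col_indicator l 1 (col K w) (label_list n G H)"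
| "cr_indicator n l G H (Suc t) K w = Mul (cr_indicator n l G H t K w)
     (tl_mset_indicator n 1 (\<lambda>(K', z). tl_nbr_count (cr_indicator n l G H t K' z)) (\<lambda>(K', z). cr n K' t z)
        (image_mset (cr n K t) (mset_set (nbrs n K w))) (vertex_list n G H))"

lemma sem_cr_indicator:
  assumes G: "G \<in> graphs n l" and H: "H \<in> graphs n l"
  shows "G' \<in> {G, H} \<Longrightarrow> K \<in> {G, H} \<Longrightarrow> \<nu> 1 \<in> {1..n} \<Longrightarrow> w \<in> {1..n} \<Longrightarrow>
    sem n G' \<nu> (cr_indicator n l G H t K w) = of_bool (cr n G' t (\<nu> 1) = cr n K t w)"
proof (induction t arbitrary: \<nu> K w)
  case 0
  then show ?case
    using sem_tl_col_indicator[of G' n l K \<nu> 1 "label_list n G H" w] col_in_label_list G H by auto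
next
  case (Suc t)
  let ?N = "image_mset (cr n G' t) (mset_set (nbrs n G' (\<nu> 1)))"
    and ?M = "image_mset (cr n K t) (mset_set (nbrs n K w))"
  have key: "cr n X t u \<in> (\<lambda>(K', z). cr n K' t z) ` set (vertex_list n G H)"
    if "X \<in> {G, H}" "u \<in> {1..n}" for X u
    unfolding set_vertex_list using that by (auto intro!: image_eqI[where x = "(X, u)"])
  have keys: "set_mset ?N \<subseteq> (\<lambda>(K', z). cr n K' t z) ` set (vertex_list n G H)"
    "set_mset ?M \<subseteq> (\<lambda>(K', z). cr n K' t z) ` set (vertex_list n G H)"
    using Suc.prems nbrs_subset[of n G' "\<nu> 1"] nbrs_subset[of n K w] by (auto intro!: key)
  have "sem n G' \<nu> (tl_mset_indicator n 1 (\<lambda>(K', z). tl_nbr_count (cr_indicator n l G H t K' z))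
      (\<lambda>(K', z). cr n K' t z) ?M (vertex_list n G H)) = of_bool (?N = ?M)"
  proof (rule sem_tl_mset_indicator[OF _ _ keys])
    fix r assume "r \<in> set (vertex_list n G H)"
    then obtain K' z where r: "r = (K', z)" "K' \<in> {G, H}" "z \<in> {1..n}" unfolding set_vertex_list by auto
    show "sem n G' \<nu> ((\<lambda>(K', z). tl_nbr_count (cr_indicator n l G H t K' z)) r) =
        real (count ?N ((\<lambda>(K', z). cr n K' t z) r))"
      unfolding r(1) prod.case by (rule sem_tl_nbr_count) (use Suc.IH Suc.prems(1) r(2,3) in auto)
  qed (simp add: card_nbrs_le)
  then show ?case using Suc.IH[where \<nu> = \<nu> and K = K and w = w, OF Suc.prems] by simp
qed

lemma cr_indicator_mem_TLd: "cr_indicator n l G H t K w \<in> TLd \<Omega> l 2 t"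
proof (induction t arbitrary: K w)
  case 0
  show ?case by (simp add: tl_col_indicator_mem_TLd)
next
  case (Suc t)
  show ?case
    using TLd_mono[OF Suc.IH] tl_nbr_count_mem_TLd[OF Suc.IH]
    by (auto intro!: tl_mset_indicator_mem_TLd)
qed

lemma free_cr_indicator: "free (cr_indicator n l G H t K w) \<subseteq> {1}"
proof (induction t arbitrary: K w)
  case 0
  show ?case using free_subset_if_mem_TLd[OF tl_col_indicator_mem_TLd[of 1 1]] by simp
next
  case (Suc t)
  have "free (tl_mset_indicator n 1 (\<lambda>(K', z). tl_nbr_count (cr_indicator n l G H t K' z))
      (\<lambda>(K', z). cr n K' t z) (image_mset (cr n K t) (mset_set (nbrs n K w))) (vertex_list n G H)) \<subseteq> {1}"
    by (rule free_tl_mset_indicator) (use free_tl_nbr_count[OF Suc.IH] in \<open>auto split: prod.splits\<close>)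
  then show ?case using Suc.IH by auto
qed

lemma gcr_eq_if_closed_vals_eq:
  assumes G: "G \<in> graphs n l" and H: "H \<in> graphs n l"
    and vals: "\<And>\<phi>. \<phi> \<in> TLd \<Omega> l 2 (Suc t) \<Longrightarrow> free \<phi> = {} \<Longrightarrow> closed_val n G \<phi> = closed_val n H \<phi>"
  shows "gcr n G t = gcr n H t"
proof -
  have count: "closed_val n G' (Sum 1 (cr_indicator n l G H t K w)) = real (count (gcr n G' t) (cr n K t w))"
    if "G' \<in> {G, H}" "K \<in> {G, H}" "w \<in> {1..n}" for G' K w
  proof -
    have "closed_val n G' (Sum 1 (cr_indicator n l G H t K w)) = (\<Sum>v\<in>{1..n}. of_bool (cr n G' t v = cr n K t w))"
      unfolding closed_val_def using sem_cr_indicator[OF G H that(1,2) _ that(3)] by simp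
    also have "\<dots> = real (count (gcr n G' t) (cr n K t w))"
      unfolding gcr_def by (rule sum_of_bool_eq_count) simp
    finally show ?thesis .
  qed
  have closed: "Sum 1 (cr_indicator n l G H t K w) \<in> TLd \<Omega> l 2 (Suc t)"
    "free (Sum 1 (cr_indicator n l G H t K w)) = {}" for K w
    using cr_indicator_mem_TLd free_cr_indicator by auto
  let ?S = "(\<lambda>(K, w). cr n K t w) ` ({G, H} \<times> {1..n})"
  have "gcr n G t = gcr n H t \<longleftrightarrow> (\<forall>c\<in>?S. count (gcr n G t) c = count (gcr n H t) c)"
    by (rule multiset_eq_iff_count_eq_on) (auto simp: gcr_def simp del: insert_iff)
  moreover have "count (gcr n G t) c = count (gcr n H t) c" if c: "c \<in> ?S" for c
  proof -
    obtain p where p: "c = (\<lambda>(K, w). cr n K t w) p" "p \<in> {G, H} \<times> {1..n}" using c by (rule imageE)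
    obtain K w where K: "K \<in> {G, H}" "w \<in> {1..n}" "c = cr n K t w"
      using p by (cases p) (simp only: mem_Times_iff fst_conv snd_conv prod.case, blast)
    then show ?thesis using count[of G K w] count[of H K w] vals[OF closed] by simp
  qed
  ultimately show ?thesis by blast
qed

primrec wl_indicator :: "nat \<Rightarrow> nat \<Rightarrow> nat \<Rightarrow> graph \<Rightarrow> graph \<Rightarrow> nat \<Rightarrow> graph \<Rightarrow> nat list \<Rightarrow> tl" where
  "wl_indicator n l k G H 0 K ws = tl_atp_indicator l (label_list n G H) K ws"
| "wl_indicator n l k G H (Suc t) K ws = Mul (wl_indicator n l k G H t K ws)
     (tl_mset_indicator n 1
        (\<lambda>(K', z, u). tl_wl_entry_count l (label_list n G H) k (wl_indicator n l k G H t K') K' z u)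
        (\<lambda>(K', z, u). wl_entry n K' t z u) (image_mset (wl_entry n K t ws) (mset_set {1..n}))
        (entry_list n k G H))"

lemma sem_wl_indicator:
  assumes G: "G \<in> graphs n l" and H: "H \<in> graphs n l"
  shows "G' \<in> {G, H} \<Longrightarrow> K \<in> {G, H} \<Longrightarrow> vs \<in> tuples n k \<Longrightarrow> ws \<in> tuples n k \<Longrightarrow>
    \<forall>i<k. \<nu> (Suc i) = vs ! i \<Longrightarrow>
    sem n G' \<nu> (wl_indicator n l k G H t K ws) = of_bool (wl n G' t vs = wl n K t ws)"
proof (induction t arbitrary: \<nu> vs K ws)
  case 0
  have graphs: "G' \<in> graphs n l" "K \<in> graphs n l" using 0(1,2) G H by auto
  have lens: "length vs = k" "length ws = k" using 0(3,4) by (simp_all add: tuples_def)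
  have cols: "\<forall>i<length vs. col G' (vs ! i) \<in> set (label_list n G H)"
    using 0(1) lens(1) nth_in_tuples[OF 0(3)] col_in_label_list by auto
  show ?case using sem_tl_atp_indicator[OF graphs _ _ cols] 0(5) lens by simp
next
  case (Suc t)
  let ?N = "image_mset (wl_entry n G' t vs) (mset_set {1..n})"
    and ?M = "image_mset (wl_entry n K t ws) (mset_set {1..n})"
  have key: "wl_entry n X t z u \<in> (\<lambda>(K', z, u). wl_entry n K' t z u) ` set (entry_list n k G H)"
    if "X \<in> {G, H}" "z \<in> tuples n k" "u \<in> {1..n}" for X z u
    unfolding set_entry_list using that by (auto intro!: image_eqI[where x = "(X, z, u)"])
  have keys: "set_mset ?N \<subseteq> (\<lambda>(K', z, u). wl_entry n K' t z u) ` set (entry_list n k G H)"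
    "set_mset ?M \<subseteq> (\<lambda>(K', z, u). wl_entry n K' t z u) ` set (entry_list n k G H)"
    using Suc.prems by (auto intro!: key)
  have "sem n G' \<nu> (tl_mset_indicator n 1
      (\<lambda>(K', z, u). tl_wl_entry_count l (label_list n G H) k (wl_indicator n l k G H t K') K' z u)
      (\<lambda>(K', z, u). wl_entry n K' t z u) ?M (entry_list n k G H)) = of_bool (?N = ?M)"
  proof (rule sem_tl_mset_indicator[OF _ _ keys])
    fix r assume "r \<in> set (entry_list n k G H)"
    then obtain K' z u where r: "r = (K', z, u)" "K' \<in> {G, H}" "z \<in> tuples n k" "u \<in> {1..n}"
      unfolding set_entry_list by auto
    have graphs: "G' \<in> graphs n l" "K' \<in> graphs n l" using Suc.prems(1) r(2) G H by auto
    show "sem n G' \<nu> ((\<lambda>(K', z, u). tl_wl_entry_count l (label_list n G H) k (wl_indicator n l k G H t K') K' z u) r) =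
        real (count ?N ((\<lambda>(K', z, u). wl_entry n K' t z u) r))"
      unfolding r(1) prod.case
      by (rule sem_tl_wl_entry_count[OF graphs Suc.prems(3) r(3,4) Suc.prems(5)])
        (use Suc.prems(1) r(2) col_in_label_list Suc.IH in auto)
  qed simp
  then show ?case
    using Suc.IH[where \<nu> = \<nu> and vs = vs and K = K and ws = ws, OF Suc.prems] by (simp add: wl_Suc_conv del: wl.simps)
qed

lemma wl_indicator_mem_TLd:
  "1 \<le> k \<Longrightarrow> length ws = k \<Longrightarrow> wl_indicator n l k G H t K ws \<in> TLd \<Omega> l (Suc k) t"
proof (induction t arbitrary: K ws)
  case 0
  then show ?case by (simp add: tl_atp_indicator_mem_TLd)
next
  case (Suc t)
  have "tl_wl_entry_count l (label_list n G H) k (wl_indicator n l k G H t K') K' z u \<in> TLd \<Omega> l (Suc k) (Suc t)"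
    if "(K', z, u) \<in> set (entry_list n k G H)" for K' z u
    using that Suc.prems(1) Suc.IH[OF Suc.prems(1)]
    by (intro tl_wl_entry_count_mem_TLd) (auto simp: set_entry_list tuples_def)
  then show ?case
    using Suc TLd_mono[OF Suc.IH[OF Suc.prems]] by (auto intro!: tl_mset_indicator_mem_TLd)
qed

lemma free_wl_indicator:
  "1 \<le> k \<Longrightarrow> length ws = k \<Longrightarrow> free (wl_indicator n l k G H t K ws) \<subseteq> {1..k}"
proof (induction t arbitrary: K ws)
  case 0
  then show ?case using free_subset_if_mem_TLd[OF tl_atp_indicator_mem_TLd[of k ws]] by simp
next
  case (Suc t)
  have entry: "free (tl_wl_entry_count l (label_list n G H) k (wl_indicator n l k G H t K') K' z u) \<subseteq> {1..k}"
    if "(K', z, u) \<in> set (entry_list n k G H)" for K' z u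
    using that Suc.prems(1) Suc.IH[OF Suc.prems(1)]
    by (intro free_tl_wl_entry_count) (auto simp: set_entry_list tuples_def)
  have "free (tl_mset_indicator n 1
        (\<lambda>(K', z, u). tl_wl_entry_count l (label_list n G H) k (wl_indicator n l k G H t K') K' z u)
        (\<lambda>(K', z, u). wl_entry n K' t z u) (image_mset (wl_entry n K t ws) (mset_set {1..n}))
        (entry_list n k G H)) \<subseteq> {1..k}"
  proof (rule free_tl_mset_indicator)
    fix r assume r: "r \<in> set (entry_list n k G H)"
    obtain K' z u where "r = (K', z, u)" by (rule prod_cases3)
    then show "free ((\<lambda>(K', z, u). tl_wl_entry_count l (label_list n G H) k (wl_indicator n l k G H t K') K' z u) r)
        \<subseteq> {1..k}" using entry r by simp
  qed (use Suc.prems(1) in simp)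
  then show ?case using Suc.IH[OF Suc.prems] by simp
qed

lemma gwl_eq_if_closed_vals_eq:
  assumes G: "G \<in> graphs n l" and H: "H \<in> graphs n l" and k: "1 \<le> k"
    and vals: "\<And>\<phi>. \<phi> \<in> TLd \<Omega> l (Suc k) (k + t) \<Longrightarrow> free \<phi> = {} \<Longrightarrow> closed_val n G \<phi> = closed_val n H \<phi>"
  shows "gwl n G k t = gwl n H k t"
proof -
  let ?\<phi> = "\<lambda>K ws. foldr Sum [1..<Suc k] (wl_indicator n l k G H t K ws)"
  have count: "closed_val n G' (?\<phi> K ws) = real (count (gwl n G' k t) (wl n K t ws))"
    if "G' \<in> {G, H}" "K \<in> {G, H}" "ws \<in> tuples n k" for G' K ws
    unfolding gwl_def by (rule closed_val_foldr_Sum) (use sem_wl_indicator[OF G H that(1,2) _ that(3)] in auto)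
  have closed: "?\<phi> K ws \<in> TLd \<Omega> l (Suc k) (k + t)" "free (?\<phi> K ws) = {}" if "ws \<in> tuples n k" for K ws
  proof -
    have len: "length ws = k" using that by (simp add: tuples_def)
    have "set [1..<Suc k] \<subseteq> {1..Suc k}" by auto
    then have "?\<phi> K ws \<in> TLd \<Omega> l (Suc k) (length [1..<Suc k] + t)"
      by (rule foldr_Sum_mem_TLd[OF _ wl_indicator_mem_TLd[OF k len]])
    then show "?\<phi> K ws \<in> TLd \<Omega> l (Suc k) (k + t)" by (simp del: upt_Suc)
    show "free (?\<phi> K ws) = {}"
      using free_wl_indicator[OF k len, of n l G H t K] by (auto simp: free_foldr_Sum simp del: upt_Suc)
  qed
  let ?S = "(\<lambda>(K, ws). wl n K t ws) ` ({G, H} \<times> tuples n k)"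
  have "gwl n G k t = gwl n H k t \<longleftrightarrow> (\<forall>c\<in>?S. count (gwl n G k t) c = count (gwl n H k t) c)"
    by (rule multiset_eq_iff_count_eq_on) (auto simp: gwl_def finite_tuples simp del: insert_iff wl.simps)
  moreover have "count (gwl n G k t) c = count (gwl n H k t) c" if c: "c \<in> ?S" for c
  proof -
    obtain p where p: "c = (\<lambda>(K, ws). wl n K t ws) p" "p \<in> {G, H} \<times> tuples n k" using c by (rule imageE)
    obtain K ws where K: "K \<in> {G, H}" "ws \<in> tuples n k" "c = wl n K t ws"
      using p by (cases p) (simp only: mem_Times_iff fst_conv snd_conv prod.case, blast)
    then show ?thesis using count[of G K ws] count[of H K ws] vals[OF closed] by simp
  qed
  ultimately show ?thesis by blast
qed

lemma rho0_gcr_eq_rho0_TLd: "rho0_gcr n l t = rho0_TL n l (TLd \<Omega> l 2 (t + 1))"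
proof -
  have "gcr n G t = gcr n H t \<longleftrightarrow>
      (\<forall>\<phi>\<in>TLd \<Omega> l 2 (t + 1). free \<phi> = {} \<longrightarrow> closed_val n G \<phi> = closed_val n H \<phi>)"
    if G: "G \<in> graphs n l" and H: "H \<in> graphs n l" for G H
  proof
    assume "gcr n G t = gcr n H t"
    then show "\<forall>\<phi>\<in>TLd \<Omega> l 2 (t + 1). free \<phi> = {} \<longrightarrow> closed_val n G \<phi> = closed_val n H \<phi>"
      using closed_val_eq_if_gcr_eq[OF G H] by (simp add: mem_TLd_iff)
  qed (rule gcr_eq_if_closed_vals_eq[OF G H, where \<Omega> = \<Omega>], simp)
  then show ?thesis unfolding rho0_gcr_def rho0_TL_def by auto
qed

lemma rho0_gwl_one_eq_rho0_TLd: "rho0_gwl n l 1 t = rho0_TL n l (TLd \<Omega> l 2 (t + 1))"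
proof -
  have "gwl n G 1 t = gwl n H 1 t \<longleftrightarrow>
      (\<forall>\<phi>\<in>TLd \<Omega> l 2 (t + 1). free \<phi> = {} \<longrightarrow> closed_val n G \<phi> = closed_val n H \<phi>)"
    if G: "G \<in> graphs n l" and H: "H \<in> graphs n l" for G H
  proof
    assume "gwl n G 1 t = gwl n H 1 t"
    then show "\<forall>\<phi>\<in>TLd \<Omega> l 2 (t + 1). free \<phi> = {} \<longrightarrow> closed_val n G \<phi> = closed_val n H \<phi>"
      using closed_val_eq_if_gwl_one_eq[OF G H] by (simp add: mem_TLd_iff)
  qed (rule gwl_eq_if_closed_vals_eq[OF G H order.refl, where \<Omega> = \<Omega>], simp add: numeral_2_eq_2)
  then show ?thesis unfolding rho0_gwl_def rho0_TL_def by auto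
qed

lemma rho0_gwl_inf_eq_rho0_TL:
  assumes n: "n \<ge> 1" and k: "k \<ge> 1"
  shows "rho0_gwl_inf n l k = rho0_TL n l (TL \<Omega> l (k + 1))"
proof -
  have "(\<forall>t. gwl n G k t = gwl n H k t) \<longleftrightarrow>
      (\<forall>\<phi>\<in>TL \<Omega> l (k + 1). free \<phi> = {} \<longrightarrow> closed_val n G \<phi> = closed_val n H \<phi>)"
    if G: "G \<in> graphs n l" and H: "H \<in> graphs n l" for G H
  proof
    assume gwl: "\<forall>t. gwl n G k t = gwl n H k t"
    show "\<forall>\<phi>\<in>TL \<Omega> l (k + 1). free \<phi> = {} \<longrightarrow> closed_val n G \<phi> = closed_val n H \<phi>"
      using closed_val_eq_if_gwl_eq[OF G H n gwl[rule_format]] by (simp add: TL_def)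
  next
    assume "\<forall>\<phi>\<in>TL \<Omega> l (k + 1). free \<phi> = {} \<longrightarrow> closed_val n G \<phi> = closed_val n H \<phi>"
    then show "\<forall>t. gwl n G k t = gwl n H k t"
      by (intro allI gwl_eq_if_closed_vals_eq[OF G H k, where \<Omega> = \<Omega>]) (simp add: TLd_def)
  qed
  then have "(G, H) \<in> rho0_gwl_inf n l k \<longleftrightarrow> (G, H) \<in> rho0_TL n l (TL \<Omega> l (k + 1))" for G H
    unfolding rho0_gwl_inf_def rho0_gwl_def rho0_TL_def by (cases "G \<in> graphs n l \<and> H \<in> graphs n l") auto
  then show ?thesis by (simp add: set_eq_iff)
qed

theorem theorem4:
  fixes n l :: nat and \<Omega> :: "fsym set"
  assumes "n \<ge> 1" and "l \<ge> 1"
    and "\<forall>f\<in>\<Omega>. fst f \<ge> 1"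
  shows "\<forall>t k. k \<ge> 1 \<longrightarrow>
           rho0_gcr n l t = rho0_TL n l (TLd \<Omega> l 2 (t + 1)) \<and>
           rho0_TL n l (TLd \<Omega> l 2 (t + 1)) = rho0_gwl n l 1 t \<and>
           rho0_gwl_inf n l k = rho0_TL n l (TL \<Omega> l (k + 1))"
  using rho0_gcr_eq_rho0_TLd rho0_gwl_one_eq_rho0_TLd rho0_gwl_inf_eq_rho0_TL[OF assms(1)] by simp

end
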